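(* Let $f\in\mathbb{F}$ be piecewise linear with $N+1$ facet points $0=\alpha_0<\dots<\alpha_N=1$ and symmetric, i.e. $f^{-1}=f$ where $f^{-1}(\alpha):=\inf\{t\in[0,1]: f(t)\le\alpha\}$. Then there exist $K\le\lfloor N/2\rfloor+1$, values $\epsilon_0,\dots,\epsilon_{K-1}\in[0,\infty]$ and weights $w_0,\dots,w_{K-1}\ge0$ with $\sum_k w_k=1$ such that $\mathcal{C}(f)$ is (up to $\equiv$) the visible probabilistic choice of the channels $C_{\epsilon_k,0}$ with weights $w_k$, i.e. $\mathcal{C}(f)\equiv\bigoplus_{k} w_k\,C_{\epsilon_k,0}$.
   Context: Channels: fix two inputs $D_0, D_1$. A two-row channel with output set $\mathcal{Y}$ is a $2\times|\mathcal{Y}|$ matrix with nonnegative entries whose rows sum to $1$ (rows indexed by $D_0,D_1$); $\mathbb{C}_2$ is the set of such channels. Refinement: $C\sqsubseteq C'$ iff $C\cdot W=C'$ for some row-stochastic matrix $W$; $C\equiv C'$ iff both $C\sqsubseteq C'$ and $C'\sqsubseteq C$; $\min$ is greatest lower bound in $(\mathbb{C}_2,\sqsubseteq)$. $\mathbb{F}$ is the set of convex functions $f:[0,1]\to[0,1]$ with $f(\alpha)\le1-\alpha$. $f$ is piecewise linear with facet points $\alpha_0<\dots<\alpha_N$ if $f$ is affine on each $[\alpha_i,\alpha_{i+1}]$. For $\alpha\in[0,1]$, $f^\alpha$ is the $2\times2$ channel with rows $(1-\alpha,\ \alpha)$ and $(f(\alpha),\ 1-f(\alpha))$, and $\mathcal{C}(f):=\min_{\alpha\in[0,1]}f^\alpha$.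 For $\epsilon\in[0,\infty)$, $C_{\epsilon,0}$ is the randomized-response channel with rows $(\frac{e^\epsilon}{1+e^\epsilon},\frac{1}{1+e^\epsilon})$ and $(\frac{1}{1+e^\epsilon},\frac{e^\epsilon}{1+e^\epsilon})$; $C_{\infty,0}$ is the $2\times2$ identity channel. Multi-way visible choice $\bigoplus_k w_k C_k$: output set the disjoint union of the output sets of the $C_k$, with entry $w_k (C_k)_{x,y}$ at output $y$ of the $k$-th copy. *)

theory Defs
  imports "HOL-Analysis.Analysis" "HOL-Library.Nat_Bijection" "HOL-Library.Extended_Real"
begin

text \<open>A two-row channel: a finite output set Y (output labels are natural numbers)
 and a matrix M; row False is input D0, row True is input D1.
 Entries outside Y are required to be 0.\<close>
type_synonym chan = "nat set \<times> (bool \<Rightarrow> nat \<Rightarrow> real)"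

definition is_chan :: "chan \<Rightarrow> bool" where
  "is_chan C \<longleftrightarrow> finite (fst C) \<and> (\<forall>x y. 0 \<le> snd C x y)
     \<and> (\<forall>x. (\<Sum>y\<in>fst C. snd C x y) = 1) \<and> (\<forall>x y. y \<notin> fst C \<longrightarrow> snd C x y = 0)"

definition refines :: "chan \<Rightarrow> chan \<Rightarrow> bool" where
  "refines C C' \<longleftrightarrow> is_chan C \<and> is_chan C' \<and>
     (\<exists>W :: nat \<Rightarrow> nat \<Rightarrow> real.
        (\<forall>y\<in>fst C. \<forall>z\<in>fst C'. 0 \<le> W y z)
      \<and> (\<forall>y\<in>fst C. (\<Sum>z\<in>fst C'. W y z) = 1)
      \<and> (\<forall>x. \<forall>z\<in>fst C'. (\<Sum>y\<in>fst C. snd C x y * W y z) = snd C' x z))"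

definition chan_equiv :: "chan \<Rightarrow> chan \<Rightarrow> bool" where
  "chan_equiv C C' \<longleftrightarrow> refines C C' \<and> refines C' C"

definition is_glb_chan :: "chan set \<Rightarrow> chan \<Rightarrow> bool" where
  "is_glb_chan S D \<longleftrightarrow> is_chan D \<and> (\<forall>C\<in>S. refines D C)
     \<and> (\<forall>L. is_chan L \<and> (\<forall>C\<in>S. refines L C) \<longrightarrow> refines L D)"

definition chan_min :: "chan set \<Rightarrow> chan" where
  "chan_min S = (SOME D. is_glb_chan S D)"

definition in_F :: "(real \<Rightarrow> real) \<Rightarrow> bool" where
  "in_F f \<longleftrightarrow> convex_on {0..1} f \<and> (\<forall>a\<in>{0..1}. 0 \<le> f a \<and> f a \<le> 1 \<and> f a \<le> 1 - a)"

definition piecewise_linear :: "(real \<Rightarrow> real) \<Rightarrow> nat \<Rightarrow> (nat \<Rightarrow> real) \<Rightarrow> bool" where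
  "piecewise_linear f N a \<longleftrightarrow> (\<forall>i<N. a i < a (Suc i)) \<and>
     (\<forall>i<N. \<exists>m c. \<forall>t\<in>{a i..a (Suc i)}. f t = m * t + c)"

definition finv :: "(real \<Rightarrow> real) \<Rightarrow> real \<Rightarrow> real" where
  "finv f a = Inf {t \<in> {0..1}. f t \<le> a}"

definition f_chan :: "(real \<Rightarrow> real) \<Rightarrow> real \<Rightarrow> chan" where
  "f_chan f a = ({0, 1}, (\<lambda>x y. if y = 0 then (if x then f a else 1 - a)
                               else if y = 1 then (if x then 1 - f a else a) else 0))"

definition C_of :: "(real \<Rightarrow> real) \<Rightarrow> chan" where
  "C_of f = chan_min {f_chan f a | a. a \<in> {0..1}}"

definition rr_chan :: "ereal \<Rightarrow> chan" where
  "rr_chan e = ({0, 1}, (\<lambda>x y.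
     if y \<notin> {0, 1} then 0
     else if e = \<infinity> then (if (y = 1) = x then 1 else 0)
     else (if (y = 1) = x then exp (real_of_ereal e) / (1 + exp (real_of_ereal e))
           else 1 / (1 + exp (real_of_ereal e)))))"

definition vchoice :: "nat \<Rightarrow> (nat \<Rightarrow> real) \<Rightarrow> (nat \<Rightarrow> chan) \<Rightarrow> chan" where
  "vchoice K w C = ((\<Union>k<K. (\<lambda>y. prod_encode (k, y)) ` fst (C k)),
     (\<lambda>x z. case prod_decode z of (k, y) \<Rightarrow>
        if k < K \<and> y \<in> fst (C k) then w k * snd (C k) x y else 0))"

end

theory Submission
  imports Defs
begin

(* Compare channels through their hockey-stick curves
     H C l = (SUM y. max 0 (C (D1, y) - l * (C (D0, y) + C (D1, y)))),
   the call functions of the posterior distributions of the input under the uniform prior.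
   Strassen's theorem on the line (moving mass of the smaller distribution onto neighbouring atoms of
   the larger one, one atom at a time) turns H B <= H A into a garbling of A into B: Blackwell's theorem
   for dichotomies. The channel whose outputs are the facets of f has the curve sup over alpha of
   H (f^alpha), and every lower bound of the f^alpha has a larger curve, so any channel with this curve
   is the greatest lower bound C(f). As f is its own inverse, f (f b) <= b, which gives
   H l = H (1 - l) + 1 - 2 l; so the posterior distribution is symmetric about 1/2, and pairing each
   atom t <= 1/2 with 1 - t yields a mixture of randomized responses with flip probabilities t, at most
   N div 2 + 1 of them because the facet channel has N + 1 outputs. *)

section \<open>Convex order and Strassen's theorem on the line\<close>

text \<open>(Y, s, x) stands for the finite measure with mass s y at the point x y, and stop_loss Y s x l
  is its call function: the integral of max 0 (t - l).\<close>

definition stop_loss :: "'a set \<Rightarrow> ('a \<Rightarrow> real) \<Rightarrow> ('a \<Rightarrow> real) \<Rightarrow> real \<Rightarrow> real" where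
  "stop_loss Y s x l = (\<Sum>y\<in>Y. s y * max 0 (x y - l))"

lemma max0_convex_comb:
  fixes c u v t :: real
  assumes "0 \<le> t" "t \<le> 1"
  shows "max 0 (c - ((1 - t) * u + t * v)) \<le> (1 - t) * max 0 (c - u) + t * max 0 (c - v)"
proof -
  have "c - ((1 - t) * u + t * v) = (1 - t) * (c - u) + t * (c - v)"
    by (simp add: algebra_simps)
  moreover have "(1 - t) * (c - u) \<le> (1 - t) * max 0 (c - u)" "t * (c - v) \<le> t * max 0 (c - v)"
    using assms by (intro mult_left_mono; simp)+
  ultimately show ?thesis
    using assms by (intro max.boundedI) auto
qed

lemma stop_loss_convex:
  assumes "\<forall>y. 0 \<le> s y"
  shows "convex_on UNIV (stop_loss Y s x)"
proof (rule convex_onI)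
  fix t u v :: real
  assume t: "0 < t" "t < 1"
  have "stop_loss Y s x ((1 - t) * u + t * v)
      \<le> (\<Sum>y\<in>Y. (1 - t) * (s y * max 0 (x y - u)) + t * (s y * max 0 (x y - v)))"
    unfolding stop_loss_def
  proof (rule sum_mono)
    fix y
    have "s y * max 0 (x y - ((1 - t) * u + t * v))
        \<le> s y * ((1 - t) * max 0 (x y - u) + t * max 0 (x y - v))"
      using assms t by (intro mult_left_mono max0_convex_comb) auto
    then show "s y * max 0 (x y - ((1 - t) * u + t * v))
        \<le> (1 - t) * (s y * max 0 (x y - u)) + t * (s y * max 0 (x y - v))"
      by (simp add: algebra_simps)
  qed
  also have "\<dots> = (1 - t) * stop_loss Y s x u + t * stop_loss Y s x v"
    unfolding stop_loss_def by (simp add: sum.distrib sum_distrib_left)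
  finally show "stop_loss Y s x ((1 - t) *\<^sub>R u + t *\<^sub>R v)
      \<le> (1 - t) * stop_loss Y s x u + t * stop_loss Y s x v"
    by simp
qed simp

lemma stop_loss_affine_on_gap:
  assumes nonneg: "\<forall>y. 0 \<le> s y" and gap: "\<forall>y\<in>Y. 0 < s y \<longrightarrow> x y \<le> x1 \<or> x2 \<le> x y"
  obtains A B where "\<And>l. x1 \<le> l \<Longrightarrow> l \<le> x2 \<Longrightarrow> stop_loss Y s x l = A - l * B"
proof
  fix l assume l: "x1 \<le> l" "l \<le> x2"
  have "s y * max 0 (x y - l) = (if x2 \<le> x y then s y * x y else 0) - l * (if x2 \<le> x y then s y else 0)"
    if "y \<in> Y" for y
    using gap that l nonneg[rule_format, of y] by (cases "s y = 0") (auto simp: max_def algebra_simps)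
  then show "stop_loss Y s x l
      = (\<Sum>y\<in>Y. if x2 \<le> x y then s y * x y else 0) - l * (\<Sum>y\<in>Y. if x2 \<le> x y then s y else 0)"
    unfolding stop_loss_def sum_distrib_left by (simp add: sum_subtractf)
qed

text \<open>On a gap of the first measure its call function is affine while the other one is convex.\<close>

lemma stop_loss_gap_concave:
  assumes "\<forall>y. 0 \<le> sa y" "\<forall>z. 0 \<le> sb z" and gap: "\<forall>y\<in>Y. 0 < sa y \<longrightarrow> xa y \<le> x1 \<or> x2 \<le> xa y"
  shows "concave_on {x1..x2} (\<lambda>l. stop_loss Y sa xa l - stop_loss Z sb xb l)"
proof -
  obtain A B where aff: "\<And>l. x1 \<le> l \<Longrightarrow> l \<le> x2 \<Longrightarrow> stop_loss Y sa xa l = A - l * B"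
    using stop_loss_affine_on_gap[OF assms(1) gap] by blast
  have cvx: "convex_on UNIV (stop_loss Z sb xb)"
    using assms(2) by (rule stop_loss_convex)
  show ?thesis
    unfolding concave_on_def
  proof (rule convex_onI)
    fix t u v :: real
    assume t: "0 < t" "t < 1" and uv: "u \<in> {x1..x2}" "v \<in> {x1..x2}"
    have w: "(1 - t) * u + t * v \<in> {x1..x2}"
      using convexD[OF convex_real_interval(5) uv, of "1 - t" t] t by simp
    have "stop_loss Z sb xb ((1 - t) * u + t * v) \<le> (1 - t) * stop_loss Z sb xb u + t * stop_loss Z sb xb v"
      using convex_onD[OF cvx, of t u v] t by simp
    then show "- (stop_loss Y sa xa ((1 - t) *\<^sub>R u + t *\<^sub>R v) - stop_loss Z sb xb ((1 - t) *\<^sub>R u + t *\<^sub>R v))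
        \<le> (1 - t) * - (stop_loss Y sa xa u - stop_loss Z sb xb u) + t * - (stop_loss Y sa xa v - stop_loss Z sb xb v)"
      using uv w by (simp add: aff algebra_simps)
  qed simp
qed

lemma concave_on_chord:
  fixes D :: "real \<Rightarrow> real"
  assumes conc: "concave_on S D" and uv: "u \<in> S" "v \<in> S" "u < v" and l: "u \<le> l" "l \<le> v"
  shows "(v - l) * D u + (l - u) * D v \<le> (v - u) * D l"
proof -
  define t where "t = (l - u) / (v - u)"
  have t: "0 \<le> t" "t \<le> 1" and tv: "t * (v - u) = l - u"
    using uv l unfolding t_def by (auto simp: field_simps)
  have "(1 - t) * u + t * v = l"
    using tv by algebra
  then have "(1 - t) * D u + t * D v \<le> D l"
    using concave_onD[OF conc, of t u v] t uv by simp
  then have "(v - u) * ((1 - t) * D u + t * D v) \<le> (v - u) * D l"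
    using uv by (intro mult_left_mono) auto
  moreover have "(v - u) * ((1 - t) * D u + t * D v) = (v - l) * D u + (l - u) * D v"
    using tv by algebra
  ultimately show ?thesis by simp
qed

text \<open>The left-hand side is the tent over [x1, x2] with apex \<beta> (x2 - x) at x by which the call
  function drops when the mass \<alpha> + \<beta> at x is moved to x1 and x2 without changing its barycentre.\<close>

lemma tent_le_concave:
  fixes D :: "real \<Rightarrow> real"
  assumes x: "x1 < x" "x < x2" and D_nonneg: "\<And>l. 0 \<le> D l" and conc: "concave_on {x1..x2} D"
    and bary: "\<alpha> * x1 + \<beta> * x2 = (\<alpha> + \<beta>) * x" and apex: "\<beta> * (x2 - x) \<le> D x"
  shows "\<alpha> * max 0 (x1 - l) + \<beta> * max 0 (x2 - l) - (\<alpha> + \<beta>) * max 0 (x - l) \<le> D l"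
proof -
  consider "l \<le> x1" | "x1 \<le> l" "l \<le> x" | "x \<le> l" "l \<le> x2" | "x2 \<le> l"
    by linarith
  then show ?thesis
  proof cases
    case 1
    have "\<alpha> * (x1 - l) + \<beta> * (x2 - l) - (\<alpha> + \<beta>) * (x - l) = 0"
      using bary by algebra
    then show ?thesis
      using 1 x D_nonneg[of l] by simp
  next
    case 2
    have "(x - l) * D x1 + (l - x1) * D x \<le> (x - x1) * D l"
      using concave_on_chord[OF conc _ _ x(1) 2] x by simp
    moreover have "0 \<le> (x - l) * D x1"
      using D_nonneg[of x1] 2 by simp
    moreover have "(x - x1) * (\<beta> * (x2 - l) - (\<alpha> + \<beta>) * (x - l)) = (l - x1) * (\<beta> * (x2 - x))"
      using bary by algebra
    moreover have "(l - x1) * (\<beta> * (x2 - x)) \<le> (l - x1) * D x"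
      using apex 2 by (intro mult_left_mono) auto
    ultimately have "(x - x1) * (\<beta> * (x2 - l) - (\<alpha> + \<beta>) * (x - l)) \<le> (x - x1) * D l"
      by linarith
    then show ?thesis
      using 2 x by (simp add: mult_le_cancel_left_pos)
  next
    case 3
    have "(x2 - l) * D x + (l - x) * D x2 \<le> (x2 - x) * D l"
      using concave_on_chord[OF conc _ _ x(2) 3] x by simp
    moreover have "0 \<le> (l - x) * D x2"
      using D_nonneg[of x2] 3 by simp
    moreover have "(x2 - l) * (\<beta> * (x2 - x)) \<le> (x2 - l) * D x"
      using apex 3 by (intro mult_left_mono) auto
    ultimately have "(x2 - x) * (\<beta> * (x2 - l)) \<le> (x2 - x) * D l"
      by (simp add: algebra_simps)
    then show ?thesis
      using 3 x by (simp add: mult_le_cancel_left_pos)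
  next
    case 4
    then show ?thesis
      using x D_nonneg[of l] by simp
  qed
qed

lemma stop_loss_reflect:
  "stop_loss Y s (\<lambda>y. - x y) l = stop_loss Y s x (- l) - (\<Sum>y\<in>Y. s y * x y) - l * (\<Sum>y\<in>Y. s y)"
proof -
  have "s y * max 0 (- x y - l) = s y * max 0 (x y - - l) - s y * x y - l * s y" for y
    by (simp add: max_def algebra_simps)
  then show ?thesis
    unfolding stop_loss_def by (simp add: sum_subtractf sum_distrib_left)
qed

definition take_mass :: "('a \<Rightarrow> real) \<Rightarrow> 'a \<Rightarrow> real \<Rightarrow> 'a \<Rightarrow> real" where
  "take_mass s y0 m y = s y - (if y = y0 then m else 0)"

lemma sum_take_mass:
  fixes s g :: "'a \<Rightarrow> real"
  assumes "finite Y" "y0 \<in> Y"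
  shows "(\<Sum>y\<in>Y. take_mass s y0 m y * g y) = (\<Sum>y\<in>Y. s y * g y) - m * g y0"
proof -
  have "take_mass s y0 m y * g y = s y * g y - (if y = y0 then m * g y else 0)" for y
    unfolding take_mass_def by (simp add: algebra_simps)
  then show ?thesis
    using assms by (simp add: sum_subtractf)
qed

lemma stop_loss_take_mass:
  assumes "finite Y" "y0 \<in> Y"
  shows "stop_loss Y (take_mass s y0 m) x l = stop_loss Y s x l - m * max 0 (x y0 - l)"
  unfolding stop_loss_def by (rule sum_take_mass[OF assms])

lemma card_support_le:
  fixes s s' :: "'a \<Rightarrow> real"
  assumes "finite Y" "\<forall>y. s' y \<le> s y"
  shows "card {y\<in>Y. 0 < s' y} \<le> card {y\<in>Y. 0 < s y}"
  using assms by (intro card_mono) (auto intro: less_le_trans)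

lemma card_support_less:
  fixes s s' :: "'a \<Rightarrow> real"
  assumes "finite Y" "\<forall>y. s' y \<le> s y" "y0 \<in> Y" "0 < s y0" "s' y0 \<le> 0"
  shows "card {y\<in>Y. 0 < s' y} < card {y\<in>Y. 0 < s y}"
proof -
  have "{y\<in>Y. 0 < s' y} \<subseteq> {y\<in>Y. 0 < s y} - {y0}"
    using assms by (auto intro: less_le_trans)
  then show ?thesis
    using assms by (intro le_less_trans[OF card_mono card_Diff1_less]) auto
qed

definition convex_dominates ::
    "'a set \<Rightarrow> ('a \<Rightarrow> real) \<Rightarrow> ('a \<Rightarrow> real) \<Rightarrow> 'b set \<Rightarrow> ('b \<Rightarrow> real) \<Rightarrow> ('b \<Rightarrow> real) \<Rightarrow> bool" where
  "convex_dominates Y sa xa Z sb xb \<longleftrightarrow> (\<forall>y. 0 \<le> sa y) \<and> (\<forall>z. 0 \<le> sb z)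
     \<and> (\<Sum>y\<in>Y. sa y) = (\<Sum>z\<in>Z. sb z) \<and> (\<Sum>y\<in>Y. sa y * xa y) = (\<Sum>z\<in>Z. sb z * xb z)
     \<and> (\<forall>l. stop_loss Z sb xb l \<le> stop_loss Y sa xa l)"

definition martingale_coupling :: "'a set \<Rightarrow> ('a \<Rightarrow> real) \<Rightarrow> ('a \<Rightarrow> real) \<Rightarrow> 'b set \<Rightarrow> ('b \<Rightarrow> real)
    \<Rightarrow> ('b \<Rightarrow> real) \<Rightarrow> ('a \<Rightarrow> 'b \<Rightarrow> real) \<Rightarrow> bool" where
  "martingale_coupling Y sa xa Z sb xb p \<longleftrightarrow> (\<forall>y z. 0 \<le> p y z)
     \<and> (\<forall>y\<in>Y. (\<Sum>z\<in>Z. p y z) = sa y) \<and> (\<forall>z\<in>Z. (\<Sum>y\<in>Y. p y z) = sb z)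
     \<and> (\<forall>z\<in>Z. (\<Sum>y\<in>Y. p y z * xa y) = sb z * xb z)"

lemma convex_dominates_reflect:
  assumes "convex_dominates Y sa xa Z sb xb"
  shows "convex_dominates Y sa (\<lambda>y. - xa y) Z sb (\<lambda>z. - xb z)"
  using assms unfolding convex_dominates_def stop_loss_reflect by (simp add: sum_negf)

lemma convex_dominates_atom_above:
  assumes fin: "finite Y" "finite Z" and dom: "convex_dominates Y sa xa Z sb xb"
    and z0: "z0 \<in> Z" "0 < sb z0"
  shows "\<exists>y\<in>Y. 0 < sa y \<and> xb z0 \<le> xa y"
proof (rule ccontr)
  assume "\<not> ?thesis"
  then have below: "\<forall>y\<in>Y. 0 < sa y \<longrightarrow> xa y < xb z0"
    by auto
  define l where "l = Max (insert (xb z0 - 1) (xa ` {y\<in>Y. 0 < sa y}))"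
  have "l < xb z0"
    using fin below unfolding l_def by auto
  moreover have "\<forall>y\<in>Y. 0 < sa y \<longrightarrow> xa y \<le> l"
    using fin unfolding l_def by auto
  then have "stop_loss Y sa xa l = 0"
    unfolding stop_loss_def using dom unfolding convex_dominates_def
    by (intro sum.neutral) (metis max_absorb1 diff_le_0_iff_le mult_zero_left mult_zero_right order_le_less)
  moreover have "sb z0 * max 0 (xb z0 - l) \<le> stop_loss Z sb xb l"
    unfolding stop_loss_def using fin z0 dom unfolding convex_dominates_def
    by (intro member_le_sum) auto
  ultimately show False
    using dom z0 unfolding convex_dominates_def by (smt (verit) mult_pos_pos)
qed

lemma convex_dominates_atom_below:
  assumes "finite Y" "finite Z" "convex_dominates Y sa xa Z sb xb" "z0 \<in> Z" "0 < sb z0"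
  shows "\<exists>y\<in>Y. 0 < sa y \<and> xa y \<le> xb z0"
  using convex_dominates_atom_above[OF assms(1,2) convex_dominates_reflect[OF assms(3)] assms(4,5)]
  by auto

lemma martingale_coupling_add_column:
  assumes fin: "finite Y" "finite Z" and z0: "z0 \<in> Z"
    and p: "martingale_coupling Y sa xa Z sb xb p"
    and r: "\<forall>y. 0 \<le> r y" and bary: "(\<Sum>y\<in>Y. r y * xa y) = (\<Sum>y\<in>Y. r y) * xb z0"
  shows "martingale_coupling Y (\<lambda>y. sa y + r y) xa Z (\<lambda>z. sb z + (if z = z0 then \<Sum>y\<in>Y. r y else 0)) xb
           (\<lambda>y z. p y z + (if z = z0 then r y else 0))"
  using p r fin z0 bary
  unfolding martingale_coupling_def by (auto simp: sum.distrib distrib_right)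

text \<open>The atom at x = xb z0 is a kink of the second call function, of slope jump sb z0, inside
  an interval where the first call function is affine; this forces a gap between them at x.\<close>

lemma stop_loss_gap_at_atom:
  assumes fin: "finite Z" and dom: "convex_dominates Y sa xa Z sb xb" and z0: "z0 \<in> Z"
    and gap: "\<forall>y\<in>Y. 0 < sa y \<longrightarrow> xa y \<le> x1 \<or> x2 \<le> xa y" and x: "x1 < xb z0" "xb z0 < x2"
  shows "sb z0 * (xb z0 - x1) * (x2 - xb z0)
      \<le> (x2 - x1) * (stop_loss Y sa xa (xb z0) - stop_loss Z sb xb (xb z0))"
proof -
  define x where "x = xb z0"
  define D where "D l = stop_loss Y sa xa l - stop_loss Z sb xb l" for l
  define E where "E l = stop_loss Y sa xa l - stop_loss Z (take_mass sb z0 (sb z0)) xb l" for l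
  have D_nonneg: "0 \<le> D l" for l
    using dom unfolding D_def convex_dominates_def by simp
  have E: "E l = D l + sb z0 * max 0 (x - l)" for l
    unfolding E_def D_def stop_loss_take_mass[OF fin z0] x_def by simp
  have "concave_on {x1..x2} E"
    unfolding E_def using dom gap
    by (intro stop_loss_gap_concave) (auto simp: convex_dominates_def take_mass_def)
  then have "(x2 - x) * E x1 + (x - x1) * E x2 \<le> (x2 - x1) * E x"
    using concave_on_chord[of _ E x1 x2 x] x unfolding x_def by simp
  moreover have "(x2 - x) * (sb z0 * (x - x1)) \<le> (x2 - x) * E x1"
    using x D_nonneg[of x1] unfolding E x_def by (intro mult_left_mono) auto
  moreover have "0 \<le> (x - x1) * E x2"
    using x D_nonneg[of x2] unfolding E x_def by simp
  ultimately show ?thesis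
    using x unfolding E D_def x_def by (simp add: algebra_simps)
qed

lemma sum_take_mass_twice:
  fixes s g :: "'a \<Rightarrow> real"
  assumes "finite Y" "y1 \<in> Y" "y2 \<in> Y"
  shows "(\<Sum>y\<in>Y. take_mass (take_mass s y1 \<alpha>) y2 \<beta> y * g y) = (\<Sum>y\<in>Y. s y * g y) - \<alpha> * g y1 - \<beta> * g y2"
  using assms by (simp add: sum_take_mass)

lemma convex_dominates_take_mass:
  assumes fin: "finite Y" "finite Z" and mem: "y1 \<in> Y" "y2 \<in> Y" "z0 \<in> Z"
    and dom: "convex_dominates Y sa xa Z sb xb"
    and bary: "\<alpha> * xa y1 + \<beta> * xa y2 = (\<alpha> + \<beta>) * xb z0"
    and nonneg: "\<forall>y. 0 \<le> take_mass (take_mass sa y1 \<alpha>) y2 \<beta> y" "\<forall>z. 0 \<le> take_mass sb z0 (\<alpha> + \<beta>) z"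
    and tent: "\<And>l. \<alpha> * max 0 (xa y1 - l) + \<beta> * max 0 (xa y2 - l) - (\<alpha> + \<beta>) * max 0 (xb z0 - l)
                   \<le> stop_loss Y sa xa l - stop_loss Z sb xb l"
  shows "convex_dominates Y (take_mass (take_mass sa y1 \<alpha>) y2 \<beta>) xa Z (take_mass sb z0 (\<alpha> + \<beta>)) xb"
  unfolding convex_dominates_def
proof (intro conjI allI nonneg[rule_format])
  show "(\<Sum>y\<in>Y. take_mass (take_mass sa y1 \<alpha>) y2 \<beta> y) = (\<Sum>z\<in>Z. take_mass sb z0 (\<alpha> + \<beta>) z)"
    using sum_take_mass_twice[OF fin(1) mem(1,2), of sa \<alpha> \<beta> "\<lambda>_. 1"] sum_take_mass[OF fin(2) mem(3), of sb _ "\<lambda>_. 1"]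
      dom by (simp add: convex_dominates_def)
  show "(\<Sum>y\<in>Y. take_mass (take_mass sa y1 \<alpha>) y2 \<beta> y * xa y) = (\<Sum>z\<in>Z. take_mass sb z0 (\<alpha> + \<beta>) z * xb z)"
    using sum_take_mass_twice[OF fin(1) mem(1,2)] sum_take_mass[OF fin(2) mem(3)] dom bary
    by (simp add: convex_dominates_def)
  show "stop_loss Z (take_mass sb z0 (\<alpha> + \<beta>)) xb l \<le> stop_loss Y (take_mass (take_mass sa y1 \<alpha>) y2 \<beta>) xa l" for l
    using tent[of l] fin mem by (simp add: stop_loss_take_mass)
qed

lemma martingale_coupling_take_mass:
  assumes fin: "finite Y" "finite Z" and mem: "y1 \<in> Y" "y2 \<in> Y" "z0 \<in> Z" and \<alpha>\<beta>: "0 \<le> \<alpha>" "0 \<le> \<beta>"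
    and bary: "\<alpha> * xa y1 + \<beta> * xa y2 = (\<alpha> + \<beta>) * xb z0"
    and p: "martingale_coupling Y (take_mass (take_mass sa y1 \<alpha>) y2 \<beta>) xa Z (take_mass sb z0 (\<alpha> + \<beta>)) xb p"
  shows "\<exists>q. martingale_coupling Y sa xa Z sb xb q"
proof -
  define r where "r y = sa y - take_mass (take_mass sa y1 \<alpha>) y2 \<beta> y" for y
  have sum_r: "(\<Sum>y\<in>Y. r y * g y) = \<alpha> * g y1 + \<beta> * g y2" for g
    unfolding r_def left_diff_distrib sum_subtractf sum_take_mass_twice[OF fin(1) mem(1,2)] by simp
  have "martingale_coupling Y (\<lambda>y. take_mass (take_mass sa y1 \<alpha>) y2 \<beta> y + r y) xa
      Z (\<lambda>z. take_mass sb z0 (\<alpha> + \<beta>) z + (if z = z0 then \<Sum>y\<in>Y. r y else 0)) xb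
      (\<lambda>y z. p y z + (if z = z0 then r y else 0))"
  proof (rule martingale_coupling_add_column[OF fin mem(3) p])
    show "\<forall>y. 0 \<le> r y"
      using \<alpha>\<beta> unfolding r_def take_mass_def by simp
    show "(\<Sum>y\<in>Y. r y * xa y) = (\<Sum>y\<in>Y. r y) * xb z0"
      using sum_r[of xa] sum_r[of "\<lambda>_. 1"] bary by simp
  qed
  moreover have "(\<lambda>y. take_mass (take_mass sa y1 \<alpha>) y2 \<beta> y + r y) = sa"
    "(\<lambda>z. take_mass sb z0 (\<alpha> + \<beta>) z + (if z = z0 then \<Sum>y\<in>Y. r y else 0)) = sb"
    using sum_r[of "\<lambda>_. 1"] unfolding r_def take_mass_def by auto
  ultimately show ?thesis
    by auto
qed

lemma convex_dominates_reduce_by_transfer: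
  fixes sa :: "'a \<Rightarrow> real" and sb :: "'b \<Rightarrow> real"
  assumes fin: "finite Y" "finite Z" and mem: "y1 \<in> Y" "y2 \<in> Y" "z0 \<in> Z" "0 < sb z0"
    and dom: "convex_dominates Y sa xa Z sb xb" and \<alpha>\<beta>: "0 \<le> \<alpha>" "0 \<le> \<beta>"
    and bary: "\<alpha> * xa y1 + \<beta> * xa y2 = (\<alpha> + \<beta>) * xb z0"
    and nonneg: "\<forall>y. 0 \<le> take_mass (take_mass sa y1 \<alpha>) y2 \<beta> y" "\<forall>z. 0 \<le> take_mass sb z0 (\<alpha> + \<beta>) z"
    and tent: "\<And>l. \<alpha> * max 0 (xa y1 - l) + \<beta> * max 0 (xa y2 - l) - (\<alpha> + \<beta>) * max 0 (xb z0 - l)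
                   \<le> stop_loss Y sa xa l - stop_loss Z sb xb l"
    and emptied: "(\<exists>y\<in>Y. 0 < sa y \<and> take_mass (take_mass sa y1 \<alpha>) y2 \<beta> y \<le> 0)
                  \<or> take_mass sb z0 (\<alpha> + \<beta>) z0 \<le> 0"
  obtains sa' sb' where "convex_dominates Y sa' xa Z sb' xb"
    and "card {y\<in>Y. 0 < sa' y} + card {z\<in>Z. 0 < sb' z} < card {y\<in>Y. 0 < sa y} + card {z\<in>Z. 0 < sb z}"
    and "\<And>p. martingale_coupling Y sa' xa Z sb' xb p \<Longrightarrow> \<exists>q. martingale_coupling Y sa xa Z sb xb q"
proof
  define sa' where "sa' = take_mass (take_mass sa y1 \<alpha>) y2 \<beta>"
  define sb' where "sb' = take_mass sb z0 (\<alpha> + \<beta>)"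
  show "convex_dominates Y sa' xa Z sb' xb"
    unfolding sa'_def sb'_def using fin mem(1-3) dom bary nonneg tent by (rule convex_dominates_take_mass)
  show "\<exists>q. martingale_coupling Y sa xa Z sb xb q" if "martingale_coupling Y sa' xa Z sb' xb p" for p
    using fin mem(1-3) \<alpha>\<beta> bary that unfolding sa'_def sb'_def by (rule martingale_coupling_take_mass)
  have le: "\<forall>y. sa' y \<le> sa y" "\<forall>z. sb' z \<le> sb z"
    using \<alpha>\<beta> unfolding sa'_def sb'_def take_mass_def by auto
  show "card {y\<in>Y. 0 < sa' y} + card {z\<in>Z. 0 < sb' z} < card {y\<in>Y. 0 < sa y} + card {z\<in>Z. 0 < sb z}"
    using emptied
  proof
    assume "\<exists>y\<in>Y. 0 < sa y \<and> take_mass (take_mass sa y1 \<alpha>) y2 \<beta> y \<le> 0"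
    then show ?thesis
      using card_support_less[OF fin(1) le(1)] card_support_le[OF fin(2) le(2)]
      unfolding sa'_def by fastforce
  next
    assume "take_mass sb z0 (\<alpha> + \<beta>) z0 \<le> 0"
    then show ?thesis
      using card_support_le[OF fin(1) le(1)] card_support_less[OF fin(2) le(2) mem(3,4)]
      unfolding sb'_def by fastforce
  qed
qed

lemma bracket_weights:
  fixes x1 x x2 c c1 c2 :: real
  assumes x: "x1 < x" "x < x2" and c: "0 \<le> c" "0 \<le> c1" "0 \<le> c2"
  obtains \<alpha> \<beta> where "0 \<le> \<alpha>" "\<alpha> \<le> c1" "0 \<le> \<beta>" "\<beta> \<le> c2" "\<alpha> + \<beta> \<le> c"
    and "\<alpha> * x1 + \<beta> * x2 = (\<alpha> + \<beta>) * x" and "\<alpha> = c1 \<or> \<beta> = c2 \<or> \<alpha> + \<beta> = c"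
proof -
  have d: "0 < x2 - x1"
    using x by simp
  define m1 m2 where "m1 = c1 * (x2 - x1) / (x2 - x)" and "m2 = c2 * (x2 - x1) / (x - x1)"
  define m where "m = min c (min m1 m2)"
  define \<alpha> \<beta> where "\<alpha> = m * (x2 - x) / (x2 - x1)" and "\<beta> = m * (x - x1) / (x2 - x1)"
  have m1: "m1 * (x2 - x) = c1 * (x2 - x1)" and m2: "m2 * (x - x1) = c2 * (x2 - x1)"
    using x unfolding m1_def m2_def by simp_all
  have "0 \<le> m1" "0 \<le> m2"
    using x c unfolding m1_def m2_def by simp_all
  then have m_bounds: "0 \<le> m" "m \<le> c" "m \<le> m1" "m \<le> m2"
    using c unfolding m_def by simp_all
  have \<alpha>: "\<alpha> * (x2 - x1) = m * (x2 - x)" and \<beta>: "\<beta> * (x2 - x1) = m * (x - x1)"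
    using d unfolding \<alpha>_def \<beta>_def by simp_all
  have "(\<alpha> + \<beta>) * (x2 - x1) = m * (x2 - x1)"
    using \<alpha> \<beta> by algebra
  then have m: "\<alpha> + \<beta> = m"
    using d by simp
  show ?thesis
  proof
    show "0 \<le> \<alpha>" "0 \<le> \<beta>"
      using x m_bounds unfolding \<alpha>_def \<beta>_def by simp_all
    show "\<alpha> + \<beta> \<le> c"
      using m m_bounds by simp
    have "(x2 - x1) * (\<alpha> * x1 + \<beta> * x2) = (x2 - x1) * ((\<alpha> + \<beta>) * x)"
      using \<alpha> \<beta> m by algebra
    then show "\<alpha> * x1 + \<beta> * x2 = (\<alpha> + \<beta>) * x"
      using d by simp
    have "\<alpha> * (x2 - x1) \<le> c1 * (x2 - x1)"
      unfolding \<alpha> m1[symmetric] using m_bounds x by (intro mult_right_mono) auto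
    then show "\<alpha> \<le> c1"
      using d by simp
    have "\<beta> * (x2 - x1) \<le> c2 * (x2 - x1)"
      unfolding \<beta> m2[symmetric] using m_bounds x by (intro mult_right_mono) auto
    then show "\<beta> \<le> c2"
      using d by simp
    consider "m = c" | "m = m1" | "m = m2"
      unfolding m_def by linarith
    then show "\<alpha> = c1 \<or> \<beta> = c2 \<or> \<alpha> + \<beta> = c"
    proof cases
      case 1
      then show ?thesis
        using m by simp
    next
      case 2
      then have "\<alpha> * (x2 - x1) = c1 * (x2 - x1)"
        unfolding \<alpha> using m1 by simp
      then show ?thesis
        using d by simp
    next
      case 3
      then have "\<beta> * (x2 - x1) = c2 * (x2 - x1)"
        unfolding \<beta> using m2 by (simp add: mult.commute)
      then show ?thesis
        using d by simp
    qed
  qed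
qed

lemma convex_dominates_reduce_bracket:
  fixes sa :: "'a \<Rightarrow> real" and sb :: "'b \<Rightarrow> real"
  assumes fin: "finite Y" "finite Z" and dom: "convex_dominates Y sa xa Z sb xb"
    and z0: "z0 \<in> Z" "0 < sb z0"
    and y1: "y1 \<in> Y" "0 < sa y1" "xa y1 < xb z0" and y2: "y2 \<in> Y" "0 < sa y2" "xb z0 < xa y2"
    and gap: "\<forall>y\<in>Y. 0 < sa y \<longrightarrow> xa y \<le> xa y1 \<or> xa y2 \<le> xa y"
  obtains sa' sb' where "convex_dominates Y sa' xa Z sb' xb"
    and "card {y\<in>Y. 0 < sa' y} + card {z\<in>Z. 0 < sb' z} < card {y\<in>Y. 0 < sa y} + card {z\<in>Z. 0 < sb z}"
    and "\<And>p. martingale_coupling Y sa' xa Z sb' xb p \<Longrightarrow> \<exists>q. martingale_coupling Y sa xa Z sb xb q"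
proof -
  define x1 x x2 where "x1 = xa y1" and "x = xb z0" and "x2 = xa y2"
  have x: "x1 < x" "x < x2"
    using y1 y2 unfolding x1_def x_def x2_def by auto
  obtain \<alpha> \<beta> where \<alpha>: "0 \<le> \<alpha>" "\<alpha> \<le> sa y1" and \<beta>: "0 \<le> \<beta>" "\<beta> \<le> sa y2" and m: "\<alpha> + \<beta> \<le> sb z0"
    and bary: "\<alpha> * x1 + \<beta> * x2 = (\<alpha> + \<beta>) * x" and exhausted: "\<alpha> = sa y1 \<or> \<beta> = sa y2 \<or> \<alpha> + \<beta> = sb z0"
    using bracket_weights[OF x, of "sb z0" "sa y1" "sa y2"] y1 y2 z0 by auto
  define D where "D l = stop_loss Y sa xa l - stop_loss Z sb xb l" for l
  have "(x2 - x1) * (\<beta> * (x2 - x)) = (\<alpha> + \<beta>) * (x - x1) * (x2 - x)"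
    using bary by algebra
  also have "\<dots> \<le> sb z0 * (x - x1) * (x2 - x)"
    using m x by (intro mult_right_mono) auto
  also have "\<dots> \<le> (x2 - x1) * D x"
    using stop_loss_gap_at_atom[OF fin(2) dom z0(1)] gap x unfolding x1_def x_def x2_def D_def by simp
  finally have apex: "\<beta> * (x2 - x) \<le> D x"
    using x by (simp add: mult_le_cancel_left_pos)
  have y12: "y1 \<noteq> y2"
    using y1 y2 by auto
  show ?thesis
  proof (rule convex_dominates_reduce_by_transfer[OF fin y1(1) y2(1) z0 dom \<alpha>(1) \<beta>(1) _ _ _ _ _ that])
    show "\<alpha> * xa y1 + \<beta> * xa y2 = (\<alpha> + \<beta>) * xb z0"
      using bary unfolding x1_def x_def x2_def .
    show "\<forall>y. 0 \<le> take_mass (take_mass sa y1 \<alpha>) y2 \<beta> y" "\<forall>z. 0 \<le> take_mass sb z0 (\<alpha> + \<beta>) z"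
      using dom \<alpha> \<beta> m y12 unfolding convex_dominates_def take_mass_def by auto
    show "\<alpha> * max 0 (xa y1 - l) + \<beta> * max 0 (xa y2 - l) - (\<alpha> + \<beta>) * max 0 (xb z0 - l)
        \<le> stop_loss Y sa xa l - stop_loss Z sb xb l" for l
      unfolding x1_def[symmetric] x2_def[symmetric] x_def[symmetric] D_def[symmetric]
    proof (rule tent_le_concave[where D = D, OF x _ _ bary apex])
      show "0 \<le> D l" for l
        using dom unfolding D_def convex_dominates_def by simp
      show "concave_on {x1..x2} D"
        using dom gap unfolding x1_def x2_def D_def
        by (intro stop_loss_gap_concave) (auto simp: convex_dominates_def)
    qed
    have "take_mass (take_mass sa y1 \<alpha>) y2 \<beta> y1 = sa y1 - \<alpha>"
      "take_mass (take_mass sa y1 \<alpha>) y2 \<beta> y2 = sa y2 - \<beta>" "take_mass sb z0 (\<alpha> + \<beta>) z0 = sb z0 - (\<alpha> + \<beta>)"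
      using y12 unfolding take_mass_def by simp_all
    then show "(\<exists>y\<in>Y. 0 < sa y \<and> take_mass (take_mass sa y1 \<alpha>) y2 \<beta> y \<le> 0) \<or> take_mass sb z0 (\<alpha> + \<beta>) z0 \<le> 0"
      using exhausted y1 y2 by force
  qed
qed

lemma convex_dominates_bracketing_atoms:
  assumes fin: "finite Y" "finite Z" and dom: "convex_dominates Y sa xa Z sb xb"
    and z0: "z0 \<in> Z" "0 < sb z0" and no_atom: "\<forall>y\<in>Y. 0 < sa y \<longrightarrow> xa y \<noteq> xb z0"
  obtains y1 y2 where "y1 \<in> Y" "0 < sa y1" "xa y1 < xb z0" and "y2 \<in> Y" "0 < sa y2" "xb z0 < xa y2"
    and "\<forall>y\<in>Y. 0 < sa y \<longrightarrow> xa y \<le> xa y1 \<or> xa y2 \<le> xa y"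
proof -
  let ?L = "{y\<in>Y. 0 < sa y \<and> xa y < xb z0}" and ?U = "{y\<in>Y. 0 < sa y \<and> xb z0 < xa y}"
  have "?L \<noteq> {}" "?U \<noteq> {}"
    using convex_dominates_atom_below[OF assms(1-5)] convex_dominates_atom_above[OF assms(1-5)] no_atom
    by (auto simp: order.order_iff_strict)
  then have "Max (xa ` ?L) \<in> xa ` ?L" "Min (xa ` ?U) \<in> xa ` ?U"
    using fin by (intro Max_in Min_in; simp)+
  then obtain y1 y2 where y1: "y1 \<in> ?L" "xa y1 = Max (xa ` ?L)" and y2: "y2 \<in> ?U" "xa y2 = Min (xa ` ?U)"
    by auto
  have "xa y \<le> xa y1 \<or> xa y2 \<le> xa y" if "y \<in> Y" "0 < sa y" for y
  proof (cases "xa y < xb z0")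
    case True
    then have "y \<in> ?L"
      using that by simp
    then show ?thesis
      using fin y1(2) by simp
  next
    case False
    then have "y \<in> ?U"
      using that no_atom by (auto simp: not_less order.order_iff_strict)
    then show ?thesis
      using fin y2(2) by simp
  qed
  with y1 y2 that show ?thesis
    by blast
qed

lemma convex_dominates_reduce:
  fixes sa :: "'a \<Rightarrow> real" and sb :: "'b \<Rightarrow> real"
  assumes fin: "finite Y" "finite Z" and dom: "convex_dominates Y sa xa Z sb xb"
    and z0: "z0 \<in> Z" "0 < sb z0"
  obtains sa' sb' where "convex_dominates Y sa' xa Z sb' xb"
    and "card {y\<in>Y. 0 < sa' y} + card {z\<in>Z. 0 < sb' z} < card {y\<in>Y. 0 < sa y} + card {z\<in>Z. 0 < sb z}"
    and "\<And>p. martingale_coupling Y sa' xa Z sb' xb p \<Longrightarrow> \<exists>q. martingale_coupling Y sa xa Z sb xb q"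
proof (cases "\<exists>y0\<in>Y. 0 < sa y0 \<and> xa y0 = xb z0")
  case True
  then obtain y0 where y0: "y0 \<in> Y" "0 < sa y0" "xa y0 = xb z0"
    by blast
  define m where "m = min (sa y0) (sb z0)"
  show ?thesis
  proof (rule convex_dominates_reduce_by_transfer[OF fin y0(1) y0(1) z0 dom, of m 0])
    show "\<forall>y. 0 \<le> take_mass (take_mass sa y0 m) y0 0 y" "\<forall>z. 0 \<le> take_mass sb z0 (m + 0) z"
      using dom unfolding convex_dominates_def take_mass_def m_def by auto
    show "(\<exists>y\<in>Y. 0 < sa y \<and> take_mass (take_mass sa y0 m) y0 0 y \<le> 0) \<or> take_mass sb z0 (m + 0) z0 \<le> 0"
      using y0 unfolding take_mass_def m_def by auto
  qed (use y0 z0 dom that in \<open>auto simp: m_def convex_dominates_def\<close>)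
next
  case False
  then obtain y1 y2 where "y1 \<in> Y" "0 < sa y1" "xa y1 < xb z0" "y2 \<in> Y" "0 < sa y2" "xb z0 < xa y2"
    "\<forall>y\<in>Y. 0 < sa y \<longrightarrow> xa y \<le> xa y1 \<or> xa y2 \<le> xa y"
    using convex_dominates_bracketing_atoms[OF assms] by blast
  then show ?thesis
    using convex_dominates_reduce_bracket[OF fin dom z0] that by blast
qed

theorem convex_dominates_imp_martingale_coupling:
  fixes sa :: "'a \<Rightarrow> real" and sb :: "'b \<Rightarrow> real"
  assumes "finite Y" "finite Z" "convex_dominates Y sa xa Z sb xb"
  shows "\<exists>p. martingale_coupling Y sa xa Z sb xb p"
  using assms(3)
proof (induction "card {y\<in>Y. 0 < sa y} + card {z\<in>Z. 0 < sb z}" arbitrary: sa sb rule: less_induct)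
  case (less sa sb)
  show ?case
  proof (cases "\<exists>z0\<in>Z. 0 < sb z0")
    case True
    then obtain z0 where "z0 \<in> Z" "0 < sb z0"
      by blast
    then obtain sa' sb' where dom': "convex_dominates Y sa' xa Z sb' xb"
      and smaller: "card {y\<in>Y. 0 < sa' y} + card {z\<in>Z. 0 < sb' z} < card {y\<in>Y. 0 < sa y} + card {z\<in>Z. 0 < sb z}"
      and lift: "\<And>p. martingale_coupling Y sa' xa Z sb' xb p \<Longrightarrow> \<exists>q. martingale_coupling Y sa xa Z sb xb q"
      using convex_dominates_reduce[OF assms(1,2) less.prems] by blast
    show ?thesis
      using less.hyps[OF smaller dom'] lift by blast
  next
    case False
    then have "\<forall>z\<in>Z. sb z = 0"
      using less.prems by (auto simp: convex_dominates_def order.order_iff_strict)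
    moreover from this have "\<forall>y\<in>Y. sa y = 0"
      using less.prems assms(1) by (auto simp: convex_dominates_def sum_nonneg_eq_0_iff)
    ultimately have "martingale_coupling Y sa xa Z sb xb (\<lambda>_ _. 0)"
      unfolding martingale_coupling_def by simp
    then show ?thesis by blast
  qed
qed

lemma stop_loss_eq_imp_point_mass_eq:
  fixes s s' u v :: "'a \<Rightarrow> real"
  assumes fin: "finite Z" and eq: "\<And>l. stop_loss Z s u l = stop_loss Z s' v l"
  shows "(\<Sum>z\<in>{z\<in>Z. u z = t}. s z) = (\<Sum>z\<in>{z\<in>Z. v z = t}. s' z)"
proof -
  define d where "d = Min (insert 1 ((\<lambda>z. \<bar>u z - t\<bar>) ` {z\<in>Z. u z \<noteq> t} \<union> (\<lambda>z. \<bar>v z - t\<bar>) ` {z\<in>Z. v z \<noteq> t}))"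
  have d: "0 < d"
    using fin unfolding d_def by auto
  have du: "u z = t \<or> d \<le> \<bar>u z - t\<bar>" and dv: "v z = t \<or> d \<le> \<bar>v z - t\<bar>" if "z \<in> Z" for z
    using fin that unfolding d_def by (auto intro!: Min_le)
  txt \<open>The second difference with step d at t of a call function picks out d times the mass at t.\<close>
  have second_diff: "stop_loss Z r w (t - d) - 2 * stop_loss Z r w t + stop_loss Z r w (t + d)
      = d * (\<Sum>z\<in>{z\<in>Z. w z = t}. r z)"
    if sep: "\<And>z. z \<in> Z \<Longrightarrow> w z = t \<or> d \<le> \<bar>w z - t\<bar>" for r w :: "'a \<Rightarrow> real"
  proof -
    have "stop_loss Z r w (t - d) - 2 * stop_loss Z r w t + stop_loss Z r w (t + d)
        = (\<Sum>z\<in>Z. r z * (max 0 (w z - (t - d)) - 2 * max 0 (w z - t) + max 0 (w z - (t + d))))"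
      unfolding stop_loss_def by (simp add: sum.distrib sum_subtractf sum_distrib_left algebra_simps)
    also have "\<dots> = (\<Sum>z\<in>Z. if w z = t then d * r z else 0)"
    proof (rule sum.cong[OF refl])
      fix z
      assume "z \<in> Z"
      then have "w z = t \<or> d \<le> \<bar>w z - t\<bar>"
        by (rule sep)
      then show "r z * (max 0 (w z - (t - d)) - 2 * max 0 (w z - t) + max 0 (w z - (t + d)))
          = (if w z = t then d * r z else 0)"
        using d by (auto simp: max_def abs_if)
    qed
    also have "\<dots> = d * (\<Sum>z\<in>{z\<in>Z. w z = t}. r z)"
      using fin by (simp add: sum.inter_filter[symmetric] sum_distrib_left)
    finally show ?thesis .
  qed
  have "d * (\<Sum>z\<in>{z\<in>Z. u z = t}. s z) = d * (\<Sum>z\<in>{z\<in>Z. v z = t}. s' z)"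
    using second_diff[of u s, OF du] second_diff[of v s', OF dv] eq by metis
  then show ?thesis
    using d by simp
qed

section \<open>Blackwell's theorem for dichotomies\<close>

lemma is_chanD:
  assumes "is_chan C"
  shows "finite (fst C)" "\<And>x y. 0 \<le> snd C x y" "\<And>x. (\<Sum>y\<in>fst C. snd C x y) = 1"
    "\<And>x y. y \<notin> fst C \<Longrightarrow> snd C x y = 0"
  using assms unfolding is_chan_def by auto

lemma is_chan_outputs_nonempty: "is_chan C \<Longrightarrow> fst C \<noteq> {}"
  using is_chanD(3)[of C True] by auto

text \<open>For l < 1 this is (1 - l) times the hockey-stick divergence of order l / (1 - l) between
  the rows D1 and D0.\<close>

definition hockey_stick :: "chan \<Rightarrow> real \<Rightarrow> real" where
  "hockey_stick C l = (\<Sum>y\<in>fst C. max 0 (snd C True y - l * (snd C False y + snd C True y)))"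

lemma hockey_stick_nonneg: "0 \<le> hockey_stick C l"
  unfolding hockey_stick_def by (intro sum_nonneg) auto

lemma hockey_stick_ge_one:
  assumes "is_chan C" "1 \<le> l"
  shows "hockey_stick C l = 0"
  unfolding hockey_stick_def
proof (intro sum.neutral ballI)
  fix y
  have "snd C True y \<le> l * snd C True y" "0 \<le> l * snd C False y"
    using assms mult_right_mono[OF assms(2) is_chanD(2)[OF assms(1)]] is_chanD(2)[OF assms(1)] by simp_all
  then show "max 0 (snd C True y - l * (snd C False y + snd C True y)) = 0"
    by (simp add: algebra_simps)
qed

lemma hockey_stick_nonpos_param:
  assumes "is_chan C" "l \<le> 0"
  shows "hockey_stick C l = 1 - 2 * l"
proof -
  have "max 0 (snd C True y - l * (snd C False y + snd C True y)) = snd C True y - l * (snd C False y + snd C True y)" for y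
    using assms is_chanD(2)[OF assms(1), of True y] is_chanD(2)[OF assms(1), of False y]
      mult_nonneg_nonneg[of "- l" "snd C False y + snd C True y"]
    by simp
  then show ?thesis
    unfolding hockey_stick_def
    using is_chanD(3)[OF assms(1)] by (simp add: sum_subtractf sum_distrib_left[symmetric] sum.distrib)
qed

lemma max0_sum_le:
  fixes g :: "'a \<Rightarrow> real"
  assumes "\<forall>y\<in>S. 0 \<le> c y"
  shows "max 0 (\<Sum>y\<in>S. c y * g y) \<le> (\<Sum>y\<in>S. c y * max 0 (g y))"
  using assms by (intro max.boundedI sum_nonneg sum_mono mult_left_mono) auto

lemma refines_imp_hockey_stick_le:
  assumes "refines A B"
  shows "hockey_stick B l \<le> hockey_stick A l"
proof -
  from assms obtain W where W0: "\<forall>y\<in>fst A. \<forall>z\<in>fst B. 0 \<le> W y z"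
    and W1: "\<forall>y\<in>fst A. (\<Sum>z\<in>fst B. W y z) = 1"
    and WA: "\<forall>x. \<forall>z\<in>fst B. (\<Sum>y\<in>fst A. snd A x y * W y z) = snd B x z"
    unfolding refines_def by blast
  define g where "g y = snd A True y - l * (snd A False y + snd A True y)" for y
  have "hockey_stick B l = (\<Sum>z\<in>fst B. max 0 (\<Sum>y\<in>fst A. W y z * g y))"
    unfolding hockey_stick_def
  proof (rule sum.cong[OF refl])
    fix z assume "z \<in> fst B"
    then show "max 0 (snd B True z - l * (snd B False z + snd B True z)) = max 0 (\<Sum>y\<in>fst A. W y z * g y)"
      using WA unfolding g_def
      by (simp add: sum_subtractf sum_distrib_left sum.distrib algebra_simps flip: WA[rule_format])
  qed
  also have "\<dots> \<le> (\<Sum>z\<in>fst B. \<Sum>y\<in>fst A. W y z * max 0 (g y))"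
    using W0 by (intro sum_mono max0_sum_le) auto
  also have "\<dots> = (\<Sum>y\<in>fst A. (\<Sum>z\<in>fst B. W y z) * max 0 (g y))"
    by (subst sum.swap) (simp add: sum_distrib_right)
  also have "\<dots> = hockey_stick A l"
    unfolding hockey_stick_def g_def using W1 by simp
  finally show ?thesis .
qed

definition out_mass :: "chan \<Rightarrow> nat \<Rightarrow> real" where
  "out_mass C y = snd C False y + snd C True y"

definition posterior :: "chan \<Rightarrow> nat \<Rightarrow> real" where
  "posterior C y = (if out_mass C y = 0 then 0 else snd C True y / out_mass C y)"

lemma out_mass_nonneg: "is_chan C \<Longrightarrow> 0 \<le> out_mass C y"
  unfolding out_mass_def using is_chanD(2) by (simp add: add_nonneg_nonneg)

lemma out_mass_eq_0_iff: "is_chan C \<Longrightarrow> out_mass C y = 0 \<longleftrightarrow> snd C False y = 0 \<and> snd C True y = 0"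
  unfolding out_mass_def using is_chanD(2) by (simp add: add_nonneg_eq_0_iff)

lemma out_mass_posterior: "is_chan C \<Longrightarrow> out_mass C y * posterior C y = snd C True y"
  unfolding posterior_def using out_mass_eq_0_iff by auto

lemma hockey_stick_eq_stop_loss:
  assumes C: "is_chan C"
  shows "hockey_stick C l = stop_loss (fst C) (out_mass C) (posterior C) l"
  unfolding stop_loss_def hockey_stick_def
proof (rule sum.cong[OF refl])
  fix y
  show "max 0 (snd C True y - l * (snd C False y + snd C True y)) = out_mass C y * max 0 (posterior C y - l)"
  proof (cases "out_mass C y = 0")
    case True
    then show ?thesis using out_mass_eq_0_iff[OF C] by simp
  next
    case False
    then have "0 < out_mass C y"
      using out_mass_nonneg[OF C, of y] by linarith
    then have "out_mass C y * max 0 (posterior C y - l) = max 0 (out_mass C y * (posterior C y - l))"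
      by (simp add: max_mult_distrib_left)
    also have "out_mass C y * (posterior C y - l) = snd C True y - l * (snd C False y + snd C True y)"
      using out_mass_posterior[OF C, of y] unfolding out_mass_def by (simp add: algebra_simps)
    finally show ?thesis ..
  qed
qed

lemma martingale_coupling_zero_row:
  assumes "martingale_coupling Y sa xa Z sb xb p" "finite Z" "y \<in> Y" "sa y = 0" "z \<in> Z"
  shows "p y z = 0"
  using assms sum_nonneg_eq_0_iff[of Z "p y"] unfolding martingale_coupling_def by auto

text \<open>Garbling an output y of A into z with probability p y z / out_mass A y.\<close>

lemma martingale_coupling_imp_refines:
  assumes A: "is_chan A" and B: "is_chan B"
    and p: "martingale_coupling (fst A) (out_mass A) (posterior A) (fst B) (out_mass B) (posterior B) p"
  shows "refines A B"
proof -
  from p have p0: "\<forall>y z. 0 \<le> p y z" and pA: "\<forall>y\<in>fst A. (\<Sum>z\<in>fst B. p y z) = out_mass A y"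
    and pB: "\<forall>z\<in>fst B. (\<Sum>y\<in>fst A. p y z) = out_mass B z"
    and pX: "\<forall>z\<in>fst B. (\<Sum>y\<in>fst A. p y z * posterior A y) = out_mass B z * posterior B z"
    unfolding martingale_coupling_def by auto
  obtain z0 where z0: "z0 \<in> fst B"
    using is_chan_outputs_nonempty[OF B] by auto
  define W where "W y z = (if out_mass A y = 0 then (if z = z0 then 1 else 0) else p y z / out_mass A y)" for y z
  have p_null: "p y z = 0" if "y \<in> fst A" "z \<in> fst B" "out_mass A y = 0" for y z
    using martingale_coupling_zero_row[OF p is_chanD(1)[OF B]] that by blast
  have WT: "snd A True y * W y z = p y z * posterior A y" if "y \<in> fst A" "z \<in> fst B" for y z
    using p_null[OF that] out_mass_eq_0_iff[OF A] unfolding W_def posterior_def by auto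
  have WF: "snd A False y * W y z = p y z - p y z * posterior A y" if "y \<in> fst A" "z \<in> fst B" for y z
  proof (cases "out_mass A y = 0")
    case True
    then show ?thesis
      using p_null[OF that] out_mass_eq_0_iff[OF A] by simp
  next
    case False
    have "p y z * snd A False y + p y z * snd A True y = out_mass A y * p y z"
      unfolding out_mass_def by (simp add: algebra_simps)
    with False show ?thesis
      unfolding W_def posterior_def by (simp add: field_simps)
  qed
  show ?thesis
    unfolding refines_def
  proof (intro conjI A B exI[of _ W] ballI allI)
    fix y z
    assume "y \<in> fst A" "z \<in> fst B"
    then show "0 \<le> W y z"
      unfolding W_def using p0 out_mass_nonneg[OF A, of y] by auto
  next
    fix y
    assume y: "y \<in> fst A"
    show "(\<Sum>z\<in>fst B. W y z) = 1"
    proof (cases "out_mass A y = 0")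
      case True
      then show ?thesis
        unfolding W_def using z0 is_chanD(1)[OF B] by simp
    next
      case False
      then show ?thesis
        unfolding W_def using pA y by (simp add: sum_divide_distrib[symmetric])
    qed
  next
    fix x z
    assume z: "z \<in> fst B"
    have "(\<Sum>y\<in>fst A. snd A True y * W y z) = snd B True z"
      using WT z pX out_mass_posterior[OF B] by simp
    moreover have "(\<Sum>y\<in>fst A. snd A False y * W y z) = snd B False z"
      using WF z pX pB out_mass_posterior[OF B, of z] unfolding out_mass_def by (simp add: sum_subtractf)
    ultimately show "(\<Sum>y\<in>fst A. snd A x y * W y z) = snd B x z"
      by (cases x) simp_all
  qed
qed

theorem hockey_stick_le_imp_refines:
  assumes A: "is_chan A" and B: "is_chan B" and le: "\<And>l. hockey_stick B l \<le> hockey_stick A l"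
  shows "refines A B"
proof -
  have mass: "(\<Sum>y\<in>fst C. out_mass C y) = 2" and mean: "(\<Sum>y\<in>fst C. out_mass C y * posterior C y) = 1"
    if "is_chan C" for C
    using is_chanD(3)[OF that] out_mass_posterior[OF that] unfolding out_mass_def by (simp_all add: sum.distrib)
  have "convex_dominates (fst A) (out_mass A) (posterior A) (fst B) (out_mass B) (posterior B)"
    unfolding convex_dominates_def
    using out_mass_nonneg[OF A] out_mass_nonneg[OF B] mass[OF A] mass[OF B] mean[OF A] mean[OF B] le
    by (simp add: hockey_stick_eq_stop_loss[OF A, symmetric] hockey_stick_eq_stop_loss[OF B, symmetric])
  then obtain p where "martingale_coupling (fst A) (out_mass A) (posterior A) (fst B) (out_mass B) (posterior B) p"
    using convex_dominates_imp_martingale_coupling is_chanD(1)[OF A] is_chanD(1)[OF B] by blast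
  then show ?thesis
    by (rule martingale_coupling_imp_refines[OF A B])
qed

lemma is_glb_chan_imp_equiv_chan_min:
  assumes "is_glb_chan S D"
  shows "chan_equiv (chan_min S) D"
proof -
  have "is_glb_chan S (chan_min S)"
    unfolding chan_min_def using assms by (rule someI)
  then show ?thesis
    using assms unfolding chan_equiv_def is_glb_chan_def by blast
qed

lemma is_glb_chan_by_hockey_stick:
  assumes D: "is_chan D" and S: "\<forall>C\<in>S. is_chan C"
    and above: "\<And>C l. C \<in> S \<Longrightarrow> hockey_stick C l \<le> hockey_stick D l"
    and below: "\<And>L l. is_chan L \<Longrightarrow> \<forall>C\<in>S. refines L C \<Longrightarrow> hockey_stick D l \<le> hockey_stick L l"
  shows "is_glb_chan S D"
  unfolding is_glb_chan_def
proof (intro conjI ballI allI impI D)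
  fix C
  assume "C \<in> S"
  then show "refines D C"
    using S D above by (intro hockey_stick_le_imp_refines) auto
next
  fix L
  assume "is_chan L \<and> (\<forall>C\<in>S. refines L C)"
  then show "refines L D"
    using D below by (intro hockey_stick_le_imp_refines) auto
qed

section \<open>Randomized response and visible choice\<close>

definition rr_flip :: "ereal \<Rightarrow> real" where
  "rr_flip e = (if e = \<infinity> then 0 else 1 / (1 + exp (real_of_ereal e)))"

lemma rr_flip_bounds: "0 \<le> rr_flip e" "rr_flip e \<le> 1"
  unfolding rr_flip_def by (auto simp: add_pos_pos)

lemma fst_rr_chan: "fst (rr_chan e) = {0, 1}"
  unfolding rr_chan_def by simp

lemma snd_rr_chan:
  "snd (rr_chan e) x y = (if y = 0 then (if x then rr_flip e else 1 - rr_flip e)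
     else if y = 1 then (if x then 1 - rr_flip e else rr_flip e) else 0)"
proof -
  have "0 < 1 + exp (real_of_ereal e)"
    by (simp add: add_pos_pos)
  then have "exp (real_of_ereal e) / (1 + exp (real_of_ereal e)) = 1 - 1 / (1 + exp (real_of_ereal e))"
    by (simp add: field_simps)
  then show ?thesis
    unfolding rr_chan_def rr_flip_def by auto
qed

lemma is_chan_rr_chan: "is_chan (rr_chan e)"
  unfolding is_chan_def fst_rr_chan snd_rr_chan using rr_flip_bounds[of e] by auto

lemma hockey_stick_rr_chan: "hockey_stick (rr_chan e) l = max 0 (rr_flip e - l) + max 0 (1 - rr_flip e - l)"
  unfolding hockey_stick_def fst_rr_chan snd_rr_chan by simp

definition rr_eps :: "real \<Rightarrow> ereal" where
  "rr_eps t = (if t = 0 then \<infinity> else ereal (ln ((1 - t) / t)))"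

lemma rr_flip_rr_eps:
  assumes "0 \<le> t" "t \<le> 1/2"
  shows "rr_flip (rr_eps t) = t"
proof (cases "t = 0")
  case False
  then have "0 < t" "0 < (1 - t) / t"
    using assms by auto
  then have "1 / (1 + (1 - t) / t) = t"
    by (simp add: field_simps)
  then show ?thesis
    using \<open>0 < (1 - t) / t\<close> False unfolding rr_flip_def rr_eps_def by simp
qed (simp add: rr_flip_def rr_eps_def)

lemma rr_eps_nonneg:
  assumes "0 \<le> t" "t \<le> 1/2"
  shows "0 \<le> rr_eps t"
proof (cases "t = 0")
  case False
  then have "1 \<le> (1 - t) / t"
    using assms by (simp add: field_simps)
  then show ?thesis
    using False unfolding rr_eps_def by simp
qed (simp add: rr_eps_def)

lemma fst_vchoice: "fst (vchoice K w C) = (\<Union>k<K. (\<lambda>y. prod_encode (k, y)) ` fst (C k))"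
  unfolding vchoice_def by simp

lemma snd_vchoice_encode:
  "snd (vchoice K w C) x (prod_encode (k, y)) = (if k < K \<and> y \<in> fst (C k) then w k * snd (C k) x y else 0)"
  unfolding vchoice_def by simp

lemma sum_vchoice_outputs:
  assumes "\<forall>k<K. finite (fst (C k))"
  shows "(\<Sum>z\<in>fst (vchoice K w C). g z) = (\<Sum>k<K. \<Sum>y\<in>fst (C k). g (prod_encode (k, y)))"
proof -
  have inj: "inj_on (\<lambda>y. prod_encode (k, y)) A" for k A
    by (auto intro!: inj_onI dest: inj_onD[OF inj_prod_encode, of "(_,_)" "(_,_)", simplified])
  have "(\<Sum>z\<in>fst (vchoice K w C). g z) = (\<Sum>k<K. \<Sum>z\<in>(\<lambda>y. prod_encode (k, y)) ` fst (C k). g z)"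
    unfolding fst_vchoice
  proof (rule sum.UNION_disjoint)
    show "\<forall>i\<in>{..<K}. finite ((\<lambda>y. prod_encode (i, y)) ` fst (C i))"
      using assms by auto
    show "\<forall>i\<in>{..<K}. \<forall>j\<in>{..<K}. i \<noteq> j \<longrightarrow>
        (\<lambda>y. prod_encode (i, y)) ` fst (C i) \<inter> (\<lambda>y. prod_encode (j, y)) ` fst (C j) = {}"
      by (auto dest: inj_onD[OF inj_prod_encode, of "(_,_)" "(_,_)", simplified])
  qed simp
  also have "\<dots> = (\<Sum>k<K. \<Sum>y\<in>fst (C k). g (prod_encode (k, y)))"
    by (simp add: sum.reindex[OF inj])
  finally show ?thesis .
qed

lemma is_chan_vchoice:
  assumes C: "\<forall>k<K. is_chan (C k)" and w: "\<forall>k<K. 0 \<le> w k" and w_sum: "(\<Sum>k<K. w k) = 1"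
  shows "is_chan (vchoice K w C)"
proof -
  have fin: "\<forall>k<K. finite (fst (C k))"
    using C is_chanD by auto
  show ?thesis
    unfolding is_chan_def
  proof (intro conjI allI impI)
    show "finite (fst (vchoice K w C))"
      unfolding fst_vchoice using fin by auto
    show "0 \<le> snd (vchoice K w C) x z" for x z
      unfolding vchoice_def using C w is_chanD(2) by (auto split: prod.split)
  next
    fix x
    have "(\<Sum>z\<in>fst (vchoice K w C). snd (vchoice K w C) x z) = (\<Sum>k<K. \<Sum>y\<in>fst (C k). w k * snd (C k) x y)"
      unfolding sum_vchoice_outputs[OF fin] snd_vchoice_encode by (intro sum.cong) auto
    also have "\<dots> = 1"
      using C is_chanD(3) w_sum by (simp add: sum_distrib_left[symmetric])
    finally show "(\<Sum>z\<in>fst (vchoice K w C). snd (vchoice K w C) x z) = 1" .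
  next
    fix x z
    assume z: "z \<notin> fst (vchoice K w C)"
    obtain k y where kz: "prod_decode z = (k, y)"
      by (cases "prod_decode z") auto
    then have "z = prod_encode (k, y)"
      by (metis prod_decode_inverse)
    then have "\<not> (k < K \<and> y \<in> fst (C k))"
      using z unfolding fst_vchoice by auto
    then show "snd (vchoice K w C) x z = 0"
      unfolding vchoice_def using kz by auto
  qed
qed

lemma hockey_stick_vchoice:
  assumes C: "\<forall>k<K. is_chan (C k)" and w: "\<forall>k<K. 0 \<le> w k"
  shows "hockey_stick (vchoice K w C) l = (\<Sum>k<K. w k * hockey_stick (C k) l)"
proof -
  have fin: "\<forall>k<K. finite (fst (C k))"
    using C is_chanD by auto
  show ?thesis
    unfolding hockey_stick_def sum_vchoice_outputs[OF fin] snd_vchoice_encode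
  proof (rule sum.cong[OF refl])
    fix k
    assume k: "k \<in> {..<K}"
    have "max 0 (w k * snd (C k) True y - l * (w k * snd (C k) False y + w k * snd (C k) True y))
        = w k * max 0 (snd (C k) True y - l * (snd (C k) False y + snd (C k) True y))" for y
    proof -
      have "w k * snd (C k) True y - l * (w k * snd (C k) False y + w k * snd (C k) True y)
          = w k * (snd (C k) True y - l * (snd (C k) False y + snd (C k) True y))"
        by (simp add: algebra_simps)
      then show ?thesis
        using w k by (simp add: max_mult_distrib_left)
    qed
    then show "(\<Sum>y\<in>fst (C k). max 0 ((if k < K \<and> y \<in> fst (C k) then w k * snd (C k) True y else 0)
          - l * ((if k < K \<and> y \<in> fst (C k) then w k * snd (C k) False y else 0)
          + (if k < K \<and> y \<in> fst (C k) then w k * snd (C k) True y else 0))))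
        = w k * (\<Sum>y\<in>fst (C k). max 0 (snd (C k) True y - l * (snd (C k) False y + snd (C k) True y)))"
      using k by (simp add: sum_distrib_left)
  qed
qed

lemma hockey_stick_rr_choice:
  assumes r: "\<forall>k<K. 0 \<le> r k \<and> r k \<le> 1/2" and w: "\<forall>k<K. 0 \<le> w k"
  shows "hockey_stick (vchoice K w (\<lambda>k. rr_chan (rr_eps (r k)))) l
    = (\<Sum>k<K. w k * (max 0 (r k - l) + max 0 (1 - r k - l)))"
proof -
  have "hockey_stick (vchoice K w (\<lambda>k. rr_chan (rr_eps (r k)))) l
      = (\<Sum>k<K. w k * hockey_stick (rr_chan (rr_eps (r k))) l)"
    using w by (simp add: hockey_stick_vchoice is_chan_rr_chan)
  also have "\<dots> = (\<Sum>k<K. w k * (max 0 (r k - l) + max 0 (1 - r k - l)))"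
  proof (rule sum.cong[OF refl])
    fix k
    assume "k \<in> {..<K}"
    then show "w k * hockey_stick (rr_chan (rr_eps (r k))) l = w k * (max 0 (r k - l) + max 0 (1 - r k - l))"
      using r by (simp add: hockey_stick_rr_chan rr_flip_rr_eps)
  qed
  finally show ?thesis .
qed

text \<open>A distribution symmetric about 1/2 is a mixture of the two-point distributions on {t, 1 - t}
  with t \<le> 1/2; the atom at 1/2 is counted twice on the right, hence its weight is halved.\<close>

lemma stop_loss_symmetric_pairs:
  fixes \<mu> :: "real \<Rightarrow> real"
  assumes fin: "finite P" and symP: "\<And>t. t \<in> P \<Longrightarrow> 1 - t \<in> P" and sym\<mu>: "\<And>t. \<mu> (1 - t) = \<mu> t"
  shows "(\<Sum>t\<in>P. \<mu> t * max 0 (t - l))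
    = (\<Sum>t\<in>{t\<in>P. t \<le> 1/2}. (if t = 1/2 then \<mu> t / 2 else \<mu> t) * (max 0 (t - l) + max 0 (1 - t - l)))"
proof -
  let ?A = "\<lambda>t. \<mu> t * max 0 (t - l)"
  define L where "L = {t\<in>P. t \<le> 1/2}"
  define H where "H = {t\<in>P. 1/2 < t}"
  have H: "H = (\<lambda>t. 1 - t) ` {t\<in>L. t < 1/2}"
    unfolding H_def L_def using symP by (force simp: image_iff)
  have "(\<Sum>t\<in>L. (if t = 1/2 then \<mu> t / 2 else \<mu> t) * (max 0 (t - l) + max 0 (1 - t - l)))
      = (\<Sum>t\<in>L. ?A t + (if t < 1/2 then ?A (1 - t) else 0))"
  proof (rule sum.cong[OF refl])
    fix t
    assume "t \<in> L"
    then have "t \<le> 1/2"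
      unfolding L_def by simp
    show "(if t = 1/2 then \<mu> t / 2 else \<mu> t) * (max 0 (t - l) + max 0 (1 - t - l))
        = ?A t + (if t < 1/2 then ?A (1 - t) else 0)"
    proof (cases "t = 1/2")
      case True
      then show ?thesis
        unfolding True by simp
    next
      case False
      then show ?thesis
        using \<open>t \<le> 1/2\<close> sym\<mu>[of t] by (simp add: algebra_simps)
    qed
  qed
  also have "\<dots> = (\<Sum>t\<in>L. ?A t) + (\<Sum>t\<in>L. if t < 1/2 then ?A (1 - t) else 0)"
    by (rule sum.distrib)
  also have "(\<Sum>t\<in>L. if t < 1/2 then ?A (1 - t) else 0) = (\<Sum>t\<in>{t\<in>L. t < 1/2}. ?A (1 - t))"
    using fin unfolding L_def by (intro sum.inter_filter[symmetric]) simp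
  also have "(\<Sum>t\<in>{t\<in>L. t < 1/2}. ?A (1 - t)) = (\<Sum>t\<in>H. ?A t)"
    unfolding H by (simp add: sum.reindex inj_on_def)
  also have "(\<Sum>t\<in>L. ?A t) + (\<Sum>t\<in>H. ?A t) = (\<Sum>t\<in>P. ?A t)"
    using fin unfolding L_def H_def by (subst sum.union_disjoint[symmetric]) (auto intro: sum.cong)
  finally show ?thesis
    unfolding L_def by simp
qed

lemma card_symmetric_half:
  fixes P :: "real set"
  assumes fin: "finite P" and symP: "\<And>t. t \<in> P \<Longrightarrow> 1 - t \<in> P"
  shows "2 * card {t\<in>P. t \<le> 1/2} \<le> card P + 1"
proof -
  define L where "L = {t\<in>P. t < 1/2}"
  have "{t\<in>P. 1/2 < t} = (\<lambda>t. 1 - t) ` L"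
    unfolding L_def using symP by (force simp: image_iff)
  then have "card {t\<in>P. 1/2 < t} = card L"
    by (simp add: card_image inj_on_def)
  moreover have "card P = card {t\<in>P. t \<le> 1/2} + card {t\<in>P. 1/2 < t}"
    using fin by (subst card_Un_disjoint[symmetric]) (auto intro: arg_cong[where f = card])
  moreover have "card {t\<in>P. t \<le> 1/2} \<le> card (insert (1/2) L)"
    using fin unfolding L_def by (intro card_mono) auto
  moreover have "card (insert (1/2) L) \<le> card L + 1"
    using fin unfolding L_def by (simp add: card_insert_if)
  ultimately show ?thesis
    by linarith
qed

section \<open>Channels with a symmetric hockey-stick curve\<close>

lemma posterior_bounds:
  assumes "is_chan C"
  shows "0 \<le> posterior C y" "posterior C y \<le> 1"
  using is_chanD(2)[OF assms, of False y] is_chanD(2)[OF assms, of True y]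
  unfolding posterior_def out_mass_def by (auto simp: divide_le_eq_1)

lemma stop_loss_reflected_posterior:
  assumes C: "is_chan C"
  shows "stop_loss (fst C) (out_mass C) (\<lambda>y. 1 - posterior C y) l = hockey_stick C (1 - l) + 1 - 2 * l"
proof -
  have "out_mass C y * max 0 (1 - posterior C y - l)
      = max 0 (snd C True y - (1 - l) * out_mass C y) - (snd C True y - (1 - l) * out_mass C y)" for y
  proof -
    have "out_mass C y * max 0 (1 - posterior C y - l) = max 0 (out_mass C y * (1 - posterior C y - l))"
      using out_mass_nonneg[OF C] by (simp add: max_mult_distrib_left)
    also have "out_mass C y * (1 - posterior C y - l) = - (snd C True y - (1 - l) * out_mass C y)"
      using out_mass_posterior[OF C, of y] by (simp add: algebra_simps)
    finally show ?thesis
      by (simp add: max_def)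
  qed
  moreover have "(\<Sum>y\<in>fst C. snd C True y - (1 - l) * out_mass C y) = 2 * l - 1"
    using is_chanD(3)[OF C] unfolding out_mass_def
    by (simp add: sum_subtractf sum_distrib_left[symmetric] sum.distrib algebra_simps)
  ultimately show ?thesis
    unfolding stop_loss_def hockey_stick_def out_mass_def by (simp add: sum_subtractf)
qed

definition posterior_mass :: "chan \<Rightarrow> real \<Rightarrow> real" where
  "posterior_mass C t = (\<Sum>y\<in>{y\<in>fst C. posterior C y = t}. out_mass C y)"

definition posterior_support :: "chan \<Rightarrow> real set" where
  "posterior_support C = {t \<in> posterior C ` fst C. 0 < posterior_mass C t}"

lemma posterior_mass_nonneg: "is_chan C \<Longrightarrow> 0 \<le> posterior_mass C t"
  unfolding posterior_mass_def by (intro sum_nonneg out_mass_nonneg)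

lemma finite_posterior_support: "is_chan C \<Longrightarrow> finite (posterior_support C)"
  unfolding posterior_support_def using is_chanD(1) by simp

lemma card_posterior_support:
  assumes "is_chan C"
  shows "card (posterior_support C) \<le> card (fst C)"
proof -
  have "card (posterior_support C) \<le> card (posterior C ` fst C)"
    unfolding posterior_support_def using is_chanD(1)[OF assms] by (intro card_mono) auto
  also have "\<dots> \<le> card (fst C)"
    using is_chanD(1)[OF assms] by (rule card_image_le)
  finally show ?thesis .
qed

lemma hockey_stick_eq_sum_posterior_support:
  assumes C: "is_chan C"
  shows "hockey_stick C l = (\<Sum>t\<in>posterior_support C. posterior_mass C t * max 0 (t - l))"
proof -
  have "hockey_stick C l = (\<Sum>t\<in>posterior C ` fst C. \<Sum>y\<in>{y\<in>fst C. posterior C y = t}. out_mass C y * max 0 (posterior C y - l))"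
    unfolding hockey_stick_eq_stop_loss[OF C] stop_loss_def using is_chanD(1)[OF C] by (rule sum.image_gen)
  also have "\<dots> = (\<Sum>t\<in>posterior C ` fst C. posterior_mass C t * max 0 (t - l))"
    unfolding posterior_mass_def by (intro sum.cong refl) (simp add: sum_distrib_right)
  also have "\<dots> = (\<Sum>t\<in>posterior_support C. posterior_mass C t * max 0 (t - l))"
    using is_chanD(1)[OF C] posterior_mass_nonneg[OF C] unfolding posterior_support_def
    by (intro sum.mono_neutral_right) (auto simp: order.order_iff_strict)
  finally show ?thesis .
qed

text \<open>A call function determines its distribution, so the symmetry of the curve passes to the
  posterior distribution.\<close>

lemma posterior_mass_reflect:
  assumes C: "is_chan C" and sym: "\<And>l. hockey_stick C l = hockey_stick C (1 - l) + 1 - 2 * l"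
  shows "posterior_mass C (1 - t) = posterior_mass C t"
proof -
  have "stop_loss (fst C) (out_mass C) (posterior C) l = stop_loss (fst C) (out_mass C) (\<lambda>y. 1 - posterior C y) l" for l
    using sym[of l] by (simp add: hockey_stick_eq_stop_loss[OF C, symmetric] stop_loss_reflected_posterior[OF C])
  then have "posterior_mass C t = (\<Sum>y\<in>{y\<in>fst C. 1 - posterior C y = t}. out_mass C y)"
    unfolding posterior_mass_def by (rule stop_loss_eq_imp_point_mass_eq[OF is_chanD(1)[OF C]])
  also have "{y\<in>fst C. 1 - posterior C y = t} = {y\<in>fst C. posterior C y = 1 - t}"
    by auto
  finally show ?thesis
    unfolding posterior_mass_def by simp
qed

lemma posterior_support_reflect:
  assumes C: "is_chan C" and sym: "\<And>l. hockey_stick C l = hockey_stick C (1 - l) + 1 - 2 * l"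
    and t: "t \<in> posterior_support C"
  shows "1 - t \<in> posterior_support C"
proof -
  have pos: "0 < posterior_mass C (1 - t)"
    using t posterior_mass_reflect[OF C sym] unfolding posterior_support_def by simp
  then have "{y\<in>fst C. posterior C y = 1 - t} \<noteq> {}"
    unfolding posterior_mass_def by force
  then obtain y where "y \<in> fst C" "posterior C y = 1 - t"
    by blast
  then show ?thesis
    using pos unfolding posterior_support_def by (auto intro: image_eqI[where x = y])
qed

theorem symmetric_chan_rr_decomposition:
  assumes C: "is_chan C" and sym: "\<And>l. hockey_stick C l = hockey_stick C (1 - l) + 1 - 2 * l"
  obtains K eps w where "2 * K \<le> card (fst C) + 1" and "\<forall>k<K. 0 \<le> eps k \<and> 0 \<le> w k"
    and "(\<Sum>k<K. w k) = 1" and "\<And>l. hockey_stick (vchoice K w (\<lambda>k. rr_chan (eps k))) l = hockey_stick C l"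
proof
  define P where "P = posterior_support C"
  define L where "L = {t\<in>P. t \<le> 1/2}"
  define K where "K = card L"
  define r where "r k = sorted_list_of_set L ! k" for k
  define w where "w k = (if r k = 1/2 then posterior_mass C (r k) / 2 else posterior_mass C (r k))" for k
  have finP: "finite P"
    unfolding P_def using C by (rule finite_posterior_support)
  have symP: "\<And>t. t \<in> P \<Longrightarrow> 1 - t \<in> P"
    unfolding P_def using posterior_support_reflect[OF C sym] .
  have r: "bij_betw r {..<K} L"
    unfolding r_def K_def using finP L_def by (intro bij_betw_nth) simp_all
  have r_range: "\<forall>k<K. 0 \<le> r k \<and> r k \<le> 1/2"
  proof (intro allI impI)
    fix k
    assume "k < K"
    then have "r k \<in> L"
      using r unfolding bij_betw_def by auto
    then show "0 \<le> r k \<and> r k \<le> 1/2"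
      using posterior_bounds[OF C] unfolding L_def P_def posterior_support_def by auto
  qed
  have w_nonneg: "\<forall>k<K. 0 \<le> w k"
    using posterior_mass_nonneg[OF C] unfolding w_def by simp
  have H: "hockey_stick (vchoice K w (\<lambda>k. rr_chan (rr_eps (r k)))) l = hockey_stick C l" for l
  proof -
    have "hockey_stick (vchoice K w (\<lambda>k. rr_chan (rr_eps (r k)))) l
        = (\<Sum>k<K. w k * (max 0 (r k - l) + max 0 (1 - r k - l)))"
      by (rule hockey_stick_rr_choice[OF r_range w_nonneg])
    also have "\<dots> = (\<Sum>t\<in>L. (if t = 1/2 then posterior_mass C t / 2 else posterior_mass C t)
        * (max 0 (t - l) + max 0 (1 - t - l)))"
      unfolding w_def by (rule sum.reindex_bij_betw[OF r])
    also have "\<dots> = hockey_stick C l"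
      unfolding hockey_stick_eq_sum_posterior_support[OF C] L_def P_def
      using stop_loss_symmetric_pairs[where \<mu> = "posterior_mass C", OF finP symP posterior_mass_reflect[OF C sym]]
      by (simp add: P_def)
    finally show ?thesis .
  qed
  then show "hockey_stick (vchoice K w (\<lambda>k. rr_chan (rr_eps (r k)))) l = hockey_stick C l" for l .
  have "(\<Sum>k<K. w k * (max 0 (r k - 0) + max 0 (1 - r k - 0))) = (\<Sum>k<K. w k)"
  proof (rule sum.cong[OF refl])
    fix k
    assume "k \<in> {..<K}"
    then have "0 \<le> r k" "r k \<le> 1/2"
      using r_range by auto
    then show "w k * (max 0 (r k - 0) + max 0 (1 - r k - 0)) = w k"
      by simp
  qed
  then show "(\<Sum>k<K. w k) = 1"
    using H[of 0] hockey_stick_rr_choice[OF r_range w_nonneg, of 0] hockey_stick_nonpos_param[OF C, of 0] by simp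
  show "\<forall>k<K. 0 \<le> rr_eps (r k) \<and> 0 \<le> w k"
    using r_range rr_eps_nonneg w_nonneg by simp
  show "2 * K \<le> card (fst C) + 1"
    using card_symmetric_half[OF finP symP] card_posterior_support[OF C] unfolding K_def L_def P_def by linarith
qed

section \<open>The facet channel of a symmetric piecewise linear trade-off function\<close>

locale symmetric_piecewise_tradeoff =
  fixes f :: "real \<Rightarrow> real" and N :: nat and a :: "nat \<Rightarrow> real"
  assumes tradeoff: "in_F f" and piecewise: "piecewise_linear f N a"
    and a_0: "a 0 = 0" and a_N: "a N = 1" and symmetric: "\<forall>t\<in>{0..1}. finv f t = f t"
begin

lemma facet_step: "i < N \<Longrightarrow> a i < a (Suc i)"
  using piecewise unfolding piecewise_linear_def by auto

lemma facet_mono: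
  assumes "i \<le> j" "j \<le> N"
  shows "a i \<le> a j"
  using assms(1)
proof (induction rule: dec_induct)
  case (step n)
  then show ?case
    using facet_step[of n] assms(2) by simp
qed simp

lemma facet_bounds: "i \<le> N \<Longrightarrow> 0 \<le> a i \<and> a i \<le> 1"
  using facet_mono[of 0 i] facet_mono[of i N] a_0 a_N by auto

lemma f_bounds: "t \<in> {0..1} \<Longrightarrow> 0 \<le> f t \<and> f t \<le> 1 - t"
  using tradeoff unfolding in_F_def by auto

lemma f_convex: "convex_on {0..1} f"
  using tradeoff unfolding in_F_def by auto

lemma f_1: "f 1 = 0"
  using f_bounds[of 1] by auto

lemma f_antimono:
  assumes "0 \<le> s" "s \<le> t" "t \<le> 1"
  shows "f t \<le> f s"
proof (cases "t = 1")
  case True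
  then show ?thesis using f_1 f_bounds[of s] assms by auto
next
  case False
  define \<theta> where "\<theta> = (t - s) / (1 - s)"
  have "\<theta> * (1 - s) = t - s"
    using assms False unfolding \<theta>_def by simp
  then have \<theta>: "0 \<le> \<theta>" "\<theta> \<le> 1" "(1 - \<theta>) * s + \<theta> * 1 = t"
    using assms False unfolding \<theta>_def by (auto simp: divide_simps) algebra
  have "f t \<le> (1 - \<theta>) * f s + \<theta> * f 1"
    using convex_onD[OF f_convex \<theta>(1,2), of s 1] \<theta>(3) assms by simp
  also have "\<dots> \<le> f s"
    using \<theta> f_1 f_bounds[of s] assms by (simp add: mult_left_le_one_le)
  finally show ?thesis .
qed

text \<open>The only use of the symmetry f = f^-1.\<close>

lemma f_f_le:
  assumes "\<beta> \<in> {0..1}"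
  shows "f (f \<beta>) \<le> \<beta>"
proof -
  have "f \<beta> \<in> {0..1}"
    using f_bounds[OF assms] assms by auto
  then have "f (f \<beta>) = Inf {t \<in> {0..1}. f t \<le> f \<beta>}"
    using symmetric unfolding finv_def by auto
  also have "\<dots> \<le> \<beta>"
    using assms by (intro cInf_lower) (auto intro: bdd_belowI[of _ 0])
  finally show ?thesis .
qed

text \<open>Output z > 0 of the facet channel stands for the facet [a (z - 1), a z] of f: its probabilities
  under D0 and D1 are the horizontal and vertical extents of that facet. Output 0 carries the jump
  1 - f 0 at 0. The trade-off curve of this channel is f.\<close>

definition facet_p :: "nat \<Rightarrow> real" where
  "facet_p z = (if z = 0 then 0 else a z - a (z - 1))"

definition facet_q :: "nat \<Rightarrow> real" where
  "facet_q z = (if z = 0 then 1 - f 0 else f (a (z - 1)) - f (a z))"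

definition facet_chan :: chan where
  "facet_chan = ({..N}, \<lambda>x z. if z \<le> N then (if x then facet_q z else facet_p z) else 0)"

lemma facet_p_nonneg: "z \<le> N \<Longrightarrow> 0 \<le> facet_p z"
  unfolding facet_p_def using facet_mono[of "z - 1" z] by auto

lemma facet_p_pos: "1 \<le> z \<Longrightarrow> z \<le> N \<Longrightarrow> 0 < facet_p z"
  unfolding facet_p_def using facet_step[of "z - 1"] by auto

lemma facet_q_nonneg: "z \<le> N \<Longrightarrow> 0 \<le> facet_q z"
  unfolding facet_q_def
  using f_bounds[of 0] f_antimono[of "a (z - 1)" "a z"] facet_bounds[of "z - 1"] facet_bounds[of z]
    facet_mono[of "z - 1" z]
  by auto

lemma sum_facet_p: "k \<le> N \<Longrightarrow> (\<Sum>z\<le>k. facet_p z) = a k"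
  by (induction k) (simp_all add: facet_p_def a_0)

lemma sum_facet_q: "k \<le> N \<Longrightarrow> (\<Sum>z\<le>k. facet_q z) = 1 - f (a k)"
  by (induction k) (simp_all add: facet_q_def a_0)

lemma is_chan_facet_chan: "is_chan facet_chan"
proof -
  have "(\<Sum>z\<le>N. if x then facet_q z else facet_p z) = 1" for x
    using sum_facet_p[of N] sum_facet_q[of N] a_N f_1 by (cases x) simp_all
  then show ?thesis
    unfolding is_chan_def facet_chan_def using facet_p_nonneg facet_q_nonneg by auto
qed

text \<open>The summand of output 1 of f_chan f \<beta> in its hockey-stick value at l.\<close>

definition gain :: "real \<Rightarrow> real \<Rightarrow> real" where
  "gain l \<beta> = (1 - l) * (1 - f \<beta>) - l * \<beta>"

definition facet_gain :: "real \<Rightarrow> nat \<Rightarrow> real" where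
  "facet_gain l z = facet_q z - l * (facet_p z + facet_q z)"

lemma hockey_stick_facet_chan: "hockey_stick facet_chan l = (\<Sum>z\<le>N. max 0 (facet_gain l z))"
  unfolding hockey_stick_def facet_chan_def facet_gain_def by simp

lemma sum_facet_gain: "k \<le> N \<Longrightarrow> (\<Sum>z\<le>k. facet_gain l z) = gain l (a k)"
  unfolding facet_gain_def gain_def
  by (simp add: sum_subtractf sum_distrib_left[symmetric] sum.distrib sum_facet_p sum_facet_q algebra_simps)

definition facet_slope :: "nat \<Rightarrow> real" where
  "facet_slope z = facet_q z / facet_p z"

lemma facet_slope_step:
  assumes "1 \<le> z" "z < N"
  shows "facet_slope (Suc z) \<le> facet_slope z"
proof -
  have r: "0 \<le> a (z - 1)" "a (z - 1) < a z" "a z < a (Suc z)" "a (Suc z) \<le> 1"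
    using facet_bounds[of "z - 1"] facet_bounds[of "Suc z"] facet_step[of "z - 1"] facet_step[of z] assms
    by auto
  have "(f (a (z - 1)) - f (a z)) / (a (z - 1) - a z) \<le> (f (a z) - f (a (Suc z))) / (a z - a (Suc z))"
    using convex_on_slope_le[OF f_convex, of "a (z - 1)" "a (Suc z)" "a z"] r by auto
  moreover have "facet_slope z = - ((f (a (z - 1)) - f (a z)) / (a (z - 1) - a z))"
    "facet_slope (Suc z) = - ((f (a z) - f (a (Suc z))) / (a z - a (Suc z)))"
    unfolding facet_slope_def facet_q_def facet_p_def using assms r
    by (simp_all add: divide_simps) (simp_all add: algebra_simps)
  ultimately show ?thesis
    by linarith
qed

lemma facet_slope_antimono:
  assumes "1 \<le> z" "z \<le> z'" "z' \<le> N"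
  shows "facet_slope z' \<le> facet_slope z"
  using assms(2)
proof (induction rule: dec_induct)
  case (step n)
  then show ?case
    using facet_slope_step[of n] assms by simp
qed simp

lemma facet_gain_eq: "1 \<le> z \<Longrightarrow> z \<le> N \<Longrightarrow> facet_gain l z = facet_p z * ((1 - l) * facet_slope z - l)"
  unfolding facet_gain_def facet_slope_def using facet_p_pos[of z] by (simp add: field_simps)

text \<open>Since f is convex, the outputs with positive gain form an initial segment.\<close>

lemma facet_gain_pos_downward_closed:
  assumes "l \<le> 1" "1 \<le> z" "z \<le> z'" "z' \<le> N" "0 < facet_gain l z'"
  shows "0 < facet_gain l z"
proof -
  have "0 < (1 - l) * facet_slope z' - l"
    using assms facet_gain_eq[of z' l] facet_p_pos[of z'] by (simp add: zero_less_mult_iff)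
  moreover have "(1 - l) * facet_slope z' \<le> (1 - l) * facet_slope z"
    using facet_slope_antimono[of z z'] assms by (intro mult_left_mono) auto
  ultimately show ?thesis
    using facet_gain_eq[of z l] facet_p_pos[of z] assms by simp
qed

lemma hockey_stick_facet_chan_attained:
  assumes "0 \<le> l" "l \<le> 1"
  obtains k where "k \<le> N" "hockey_stick facet_chan l = gain l (a k)"
proof
  define S where "S = {z \<in> {1..N}. 0 < facet_gain l z}"
  define k where "k = (if S = {} then 0 else Max S)"
  have finS: "finite S"
    unfolding S_def by simp
  show kN: "k \<le> N"
    unfolding k_def S_def using finS by (auto simp: S_def)
  have below: "0 \<le> facet_gain l z" if "z \<le> k" for z
  proof (cases "z = 0")
    case True
    have "0 \<le> (1 - l) * (1 - f 0)"
      using assms f_bounds[of 0] by simp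
    then show ?thesis
      unfolding facet_gain_def facet_p_def facet_q_def using True by (simp add: algebra_simps)
  next
    case False
    then have "k \<in> S"
      using that finS Max_in unfolding k_def by (auto split: if_splits)
    then show ?thesis
      using facet_gain_pos_downward_closed[of l z k] False that assms unfolding S_def by auto
  qed
  have above: "facet_gain l z \<le> 0" if "k < z" "z \<le> N" for z
  proof (rule ccontr)
    assume "\<not> facet_gain l z \<le> 0"
    then have "z \<in> S"
      using that unfolding S_def by auto
    then have "z \<le> k"
      unfolding k_def using finS by auto
    then show False
      using that by simp
  qed
  have "hockey_stick facet_chan l = (\<Sum>z\<le>N. if z \<le> k then facet_gain l z else 0)"
    unfolding hockey_stick_facet_chan using below above by (intro sum.cong) auto
  also have "\<dots> = (\<Sum>z\<in>{..N} \<inter> {z. z \<le> k}. facet_gain l z)"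
    by (simp add: sum.inter_restrict)
  also have "{..N} \<inter> {z. z \<le> k} = {..k}"
    using kN by auto
  also have "(\<Sum>z\<le>k. facet_gain l z) = gain l (a k)"
    by (rule sum_facet_gain[OF kN])
  finally show "hockey_stick facet_chan l = gain l (a k)" .
qed

lemma gain_facet_le: "j \<le> N \<Longrightarrow> gain l (a j) \<le> hockey_stick facet_chan l"
  unfolding hockey_stick_facet_chan sum_facet_gain[symmetric]
  by (rule order_trans[OF sum_mono sum_mono2]) auto

lemma facet_containing:
  assumes "\<beta> \<in> {0..1}"
  obtains k where "k < N" "a k \<le> \<beta>" "\<beta> \<le> a (Suc k)"
proof -
  have "\<exists>k<n. a k \<le> \<beta> \<and> \<beta> \<le> a (Suc k)" if "1 \<le> n" "n \<le> N" "\<beta> \<le> a n" for n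
    using that
  proof (induction n)
    case (Suc n)
    show ?case
    proof (cases "1 \<le> n \<and> \<beta> \<le> a n")
      case True
      then show ?thesis
        using Suc by (auto intro: less_SucI)
    next
      case False
      then have "a n \<le> \<beta>"
        using Suc assms a_0 by (cases "n = 0") auto
      then show ?thesis
        using Suc by auto
    qed
  qed simp
  moreover have "1 \<le> N"
    using a_0 a_N by (cases N) auto
  ultimately obtain k where "k < N" "a k \<le> \<beta>" "\<beta> \<le> a (Suc k)"
    using assms a_N by fastforce
  then show ?thesis
    by (rule that)
qed

text \<open>Between facet points f is affine, so the gain is affine in \<beta> and bounded by its values at the
  two facet points.\<close>

lemma gain_le_hockey_stick_facet_chan:
  assumes "\<beta> \<in> {0..1}"
  shows "gain l \<beta> \<le> hockey_stick facet_chan l"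
proof -
  obtain k where k: "k < N" "a k \<le> \<beta>" "\<beta> \<le> a (Suc k)"
    using facet_containing[OF assms] by blast
  obtain m c where mc: "\<forall>t\<in>{a k..a (Suc k)}. f t = m * t + c"
    using piecewise k unfolding piecewise_linear_def by blast
  define u v where "u = a k" and "v = a (Suc k)"
  define \<theta> where "\<theta> = (\<beta> - u) / (v - u)"
  have uv: "u < v"
    unfolding u_def v_def using facet_step k by auto
  have "\<theta> * (v - u) = \<beta> - u"
    using uv unfolding \<theta>_def by simp
  then have \<theta>: "0 \<le> \<theta>" "\<theta> \<le> 1" "\<beta> = (1 - \<theta>) * u + \<theta> * v"
    using k uv unfolding \<theta>_def u_def v_def by (auto simp: divide_simps) algebra
  have f_affine: "f u = m * u + c" "f v = m * v + c" "f \<beta> = m * \<beta> + c"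
    using mc k uv unfolding u_def v_def by auto
  have "gain l \<beta> = (1 - \<theta>) * gain l u + \<theta> * gain l v"
    unfolding gain_def f_affine by (simp only: \<theta>(3)) (simp add: algebra_simps)
  also have "\<dots> \<le> (1 - \<theta>) * hockey_stick facet_chan l + \<theta> * hockey_stick facet_chan l"
    using gain_facet_le[of k l] gain_facet_le[of "Suc k" l] k \<theta> unfolding u_def v_def
    by (intro add_mono mult_left_mono) auto
  finally show ?thesis
    by (simp add: algebra_simps)
qed

lemma is_chan_f_chan: "\<alpha> \<in> {0..1} \<Longrightarrow> is_chan (f_chan f \<alpha>)"
  unfolding is_chan_def f_chan_def using f_bounds[of \<alpha>] by auto

lemma hockey_stick_f_chan:
  "hockey_stick (f_chan f \<alpha>) l = max 0 (f \<alpha> - l * ((1 - \<alpha>) + f \<alpha>)) + max 0 (gain l \<alpha>)"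
  unfolding hockey_stick_def f_chan_def gain_def by (simp add: algebra_simps)

text \<open>Both summands of the hockey-stick value of f_chan f \<alpha>, and their sum, are bounded by gains:
  the first one by gain l (1 - \<alpha>) since f (1 - \<alpha>) \<le> \<alpha>, the sum by gain l 1.\<close>

lemma hockey_stick_f_chan_le_facet_chan:
  assumes \<alpha>: "\<alpha> \<in> {0..1}"
  shows "hockey_stick (f_chan f \<alpha>) l \<le> hockey_stick facet_chan l"
proof -
  consider "1 \<le> l" | "l \<le> 0" | "0 < l" "l < 1"
    by linarith
  then show ?thesis
  proof cases
    case 1
    then show ?thesis
      using hockey_stick_ge_one[OF is_chan_f_chan[OF \<alpha>]] hockey_stick_ge_one[OF is_chan_facet_chan] by simp
  next
    case 2
    then show ?thesis
      using hockey_stick_nonpos_param[OF is_chan_f_chan[OF \<alpha>]] hockey_stick_nonpos_param[OF is_chan_facet_chan]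
      by simp
  next
    case 3
    define A where "A = f \<alpha> - l * ((1 - \<alpha>) + f \<alpha>)"
    have "1 - \<alpha> \<in> {0..1}" "f (1 - \<alpha>) \<le> \<alpha>"
      using \<alpha> f_bounds[of "1 - \<alpha>"] by auto
    then have "A \<le> gain l (1 - \<alpha>)"
      using 3 mult_left_mono[of "f \<alpha>" "1 - f (1 - \<alpha>)" "1 - l"] f_bounds[OF \<alpha>]
      unfolding A_def gain_def by (simp add: algebra_simps)
    then have "A \<le> hockey_stick facet_chan l"
      using gain_le_hockey_stick_facet_chan[of "1 - \<alpha>" l] \<alpha> by simp
    moreover have "gain l \<alpha> \<le> hockey_stick facet_chan l"
      using gain_le_hockey_stick_facet_chan[OF \<alpha>] .
    moreover have "A + gain l \<alpha> \<le> hockey_stick facet_chan l"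
      using gain_le_hockey_stick_facet_chan[of 1 l] f_1 unfolding A_def gain_def by (simp add: algebra_simps)
    ultimately show ?thesis
      unfolding hockey_stick_f_chan A_def[symmetric]
      using hockey_stick_nonneg[of facet_chan l] by (simp add: max_def)
  qed
qed

lemma hockey_stick_facet_chan_le_lower_bound:
  assumes L: "is_chan L" and lower: "\<forall>\<alpha>\<in>{0..1}. refines L (f_chan f \<alpha>)"
  shows "hockey_stick facet_chan l \<le> hockey_stick L l"
proof -
  consider "1 \<le> l" | "l \<le> 0" | "0 \<le> l" "l \<le> 1"
    by linarith
  then show ?thesis
  proof cases
    case 1
    then show ?thesis
      using hockey_stick_ge_one[OF is_chan_facet_chan] hockey_stick_nonneg[of L l] by simp
  next
    case 2
    then show ?thesis
      using hockey_stick_nonpos_param[OF L] hockey_stick_nonpos_param[OF is_chan_facet_chan] by simp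
  next
    case 3
    then obtain k where k: "k \<le> N" "hockey_stick facet_chan l = gain l (a k)"
      by (rule hockey_stick_facet_chan_attained)
    have "gain l (a k) \<le> hockey_stick (f_chan f (a k)) l"
      unfolding hockey_stick_f_chan by simp
    also have "\<dots> \<le> hockey_stick L l"
      using lower facet_bounds[OF k(1)] by (intro refines_imp_hockey_stick_le) auto
    finally show ?thesis
      using k by simp
  qed
qed

text \<open>The difference of the two sides is l (\<beta> - f (f \<beta>)) with \<beta> = a k.\<close>

lemma gain_facet_le_reflected:
  assumes k: "k \<le> N" and l: "0 \<le> l" "l \<le> 1"
  shows "gain l (a k) \<le> hockey_stick facet_chan (1 - l) + 1 - 2 * l"
proof -
  have "gain (1 - l) (f (a k)) + 1 - 2 * l - gain l (a k) = l * (a k - f (f (a k)))"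
    unfolding gain_def by (simp add: algebra_simps)
  moreover have "0 \<le> l * (a k - f (f (a k)))"
    using l f_f_le[of "a k"] facet_bounds[OF k] by simp
  moreover have "gain (1 - l) (f (a k)) \<le> hockey_stick facet_chan (1 - l)"
    using f_bounds[of "a k"] facet_bounds[OF k] by (intro gain_le_hockey_stick_facet_chan) auto
  ultimately show ?thesis
    by linarith
qed

lemma hockey_stick_facet_chan_symmetric:
  "hockey_stick facet_chan l = hockey_stick facet_chan (1 - l) + 1 - 2 * l"
proof -
  consider "l < 0" | "1 < l" | "0 \<le> l" "l \<le> 1"
    by linarith
  then show ?thesis
  proof cases
    case 1
    then show ?thesis
      using hockey_stick_nonpos_param[OF is_chan_facet_chan, of l] hockey_stick_ge_one[OF is_chan_facet_chan, of "1 - l"]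
      by simp
  next
    case 2
    then show ?thesis
      using hockey_stick_ge_one[OF is_chan_facet_chan, of l] hockey_stick_nonpos_param[OF is_chan_facet_chan, of "1 - l"]
      by simp
  next
    case 3
    obtain k0 where "k0 \<le> N" "hockey_stick facet_chan l = gain l (a k0)"
      using hockey_stick_facet_chan_attained 3 by blast
    then have "hockey_stick facet_chan l \<le> hockey_stick facet_chan (1 - l) + 1 - 2 * l"
      using gain_facet_le_reflected 3 by simp
    moreover obtain k1 where "k1 \<le> N" "hockey_stick facet_chan (1 - l) = gain (1 - l) (a k1)"
      using hockey_stick_facet_chan_attained[of "1 - l"] 3 by auto
    then have "hockey_stick facet_chan (1 - l) + 1 - 2 * l \<le> hockey_stick facet_chan l"
      using gain_facet_le_reflected[of k1 "1 - l"] 3 by simp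
    ultimately show ?thesis
      by (rule antisym)
  qed
qed

lemma is_glb_chan_of_facet_curve:
  assumes R: "is_chan R" and same: "\<And>l. hockey_stick R l = hockey_stick facet_chan l"
  shows "is_glb_chan {f_chan f \<alpha> | \<alpha>. \<alpha> \<in> {0..1}} R"
proof (rule is_glb_chan_by_hockey_stick[OF R])
  show "\<forall>C\<in>{f_chan f \<alpha> | \<alpha>. \<alpha> \<in> {0..1}}. is_chan C"
    using is_chan_f_chan by blast
  show "hockey_stick C l \<le> hockey_stick R l" if "C \<in> {f_chan f \<alpha> | \<alpha>. \<alpha> \<in> {0..1}}" for C l
    using that hockey_stick_f_chan_le_facet_chan unfolding same by blast
  show "hockey_stick R l \<le> hockey_stick L l"
    if "is_chan L" "\<forall>C\<in>{f_chan f \<alpha> | \<alpha>. \<alpha> \<in> {0..1}}. refines L C" for L l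
    using that hockey_stick_facet_chan_le_lower_bound[of L l] unfolding same by blast
qed

end

theorem mainTheorem10:
  fixes f :: "real \<Rightarrow> real" and N :: nat and a :: "nat \<Rightarrow> real"
  assumes "in_F f"
    and "piecewise_linear f N a" and "a 0 = 0" and "a N = 1"
    and "\<forall>t\<in>{0..1}. finv f t = f t"
  shows "\<exists>K (eps :: nat \<Rightarrow> ereal) (w :: nat \<Rightarrow> real).
           K \<le> N div 2 + 1 \<and> (\<forall>k<K. 0 \<le> eps k \<and> 0 \<le> w k) \<and> (\<Sum>k<K. w k) = 1
           \<and> chan_equiv (C_of f) (vchoice K w (\<lambda>k. rr_chan (eps k)))"
proof -
  interpret symmetric_piecewise_tradeoff f N a
    by (rule symmetric_piecewise_tradeoff.intro) (fact assms)+
  obtain K eps w where card: "2 * K \<le> card (fst facet_chan) + 1" and nonneg: "\<forall>k<K. 0 \<le> eps k \<and> 0 \<le> w k"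
    and w_sum: "(\<Sum>k<K. w k) = 1"
    and same: "\<And>l. hockey_stick (vchoice K w (\<lambda>k. rr_chan (eps k))) l = hockey_stick facet_chan l"
    using symmetric_chan_rr_decomposition[OF is_chan_facet_chan hockey_stick_facet_chan_symmetric] by blast
  have "is_chan (vchoice K w (\<lambda>k. rr_chan (eps k)))"
    using nonneg w_sum by (simp add: is_chan_vchoice is_chan_rr_chan)
  then have "is_glb_chan {f_chan f \<alpha> | \<alpha>. \<alpha> \<in> {0..1}} (vchoice K w (\<lambda>k. rr_chan (eps k)))"
    using same by (rule is_glb_chan_of_facet_curve)
  then have "chan_equiv (C_of f) (vchoice K w (\<lambda>k. rr_chan (eps k)))"
    unfolding C_of_def by (rule is_glb_chan_imp_equiv_chan_min)
  moreover have "K \<le> N div 2 + 1"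
    using card unfolding facet_chan_def by simp
  ultimately show ?thesis
    using nonneg w_sum by blast
qed

end
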